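(* Let $R_1,R_2$ be discrete valuation domains with maximal ideals $P_1=R_1p_1$ and $P_2=R_2p_2$, let $\overline{R}$ be a field, $\mathcal{V}_i:R_i\to\overline{R}$ surjective ring homomorphisms with $\ker\mathcal{V}_i=P_i$, and $R=\{(r_1,r_2)\in R_1\times R_2:\mathcal{V}_1(r_1)=\mathcal{V}_2(r_2)\}$. Let $S$ be a non-zero separated $R$-module, and let $S_1=S/P_2S$ and $S_2=S/P_1S$. Then $S$ is a pseudo-absorbing primary multiplication $R$-module if and only if $S_1$ is a pseudo-absorbing primary multiplication $R_1$-module and $S_2$ is a pseudo-absorbing primary multiplication $R_2$-module.
   Context: $R$ is local with maximal ideal $P=P_1\oplus P_2=\{(a,b):a\in P_1,b\in P_2\}$. For an $R$-module $S$, $P_1S$ means $(P_1\oplus0)S$ with $P_1\oplus0=\{(a,0):a\in P_1\}$ and $P_2S$ means $(0\oplus P_2)S$ with $0\oplus P_2=\{(0,b):b\in P_2\}$. $S$ is separated if $P_1S\cap P_2S=0$. Since $R/(0\oplus P_2)\cong R_1$ and $R/(P_1\oplus0)\cong R_2$, $S_1=S/P_2S$ is an $R_1$-module and $S_2=S/P_1S$ is an $R_2$-module. A proper ideal $I$ of a commutative ring $A$ is 2-absorbing primary if whenever $a,b,c\in A$ and $abc\in I$ then $ab\in I$ or $ac\in\sqrt I$ or $bc\in\sqrt I$. A proper submodule $N$ of an $A$-module $M$ is pseudo-absorbing primary if $(N:_AM)=\{r\in A:rM\subseteq N\}$ is a 2-absorbing primary ideal of $A$. $M$ is a pseudo-absorbing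 primary multiplication $A$-module if for every pseudo-absorbing primary submodule $N$ of $M$ there is an ideal $I$ of $A$ with $N=IM$. *)

theory Defs
  imports "HOL-Algebra.Algebra"
begin

definition dvr :: "('a, 'b) ring_scheme \<Rightarrow> bool" where
  "dvr A \<longleftrightarrow> principal_domain A \<and> \<not> field A \<and> (\<exists>!P. maximalideal P A)"

definition rad :: "('a, 'b) ring_scheme \<Rightarrow> 'a set \<Rightarrow> 'a set" where
  "rad A I = {a \<in> carrier A. \<exists>n::nat. a [^]\<^bsub>A\<^esub> n \<in> I}"

definition two_absorbing_primary :: "('a, 'b) ring_scheme \<Rightarrow> 'a set \<Rightarrow> bool" where
  "two_absorbing_primary A I \<longleftrightarrow> ideal I A \<and> I \<noteq> carrier A \<and>
     (\<forall>a\<in>carrier A. \<forall>b\<in>carrier A. \<forall>c\<in>carrier A.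
        a \<otimes>\<^bsub>A\<^esub> b \<otimes>\<^bsub>A\<^esub> c \<in> I \<longrightarrow>
        a \<otimes>\<^bsub>A\<^esub> b \<in> I \<or> a \<otimes>\<^bsub>A\<^esub> c \<in> rad A I \<or> b \<otimes>\<^bsub>A\<^esub> c \<in> rad A I)"

definition mod_colon :: "('a, 'b) ring_scheme \<Rightarrow> ('a, 'm, 'c) module_scheme \<Rightarrow> 'm set \<Rightarrow> 'a set" where
  "mod_colon A M N = {r \<in> carrier A. \<forall>m\<in>carrier M. r \<odot>\<^bsub>M\<^esub> m \<in> N}"

definition ideal_mult_mod :: "('a, 'b) ring_scheme \<Rightarrow> 'a set \<Rightarrow> ('a, 'm, 'c) module_scheme \<Rightarrow> 'm set" where
  "ideal_mult_mod A I M =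
     \<Inter>{N. submodule N A M \<and> (\<forall>a\<in>I. \<forall>m\<in>carrier M. a \<odot>\<^bsub>M\<^esub> m \<in> N)}"

definition pseudo_abs_primary_submodule ::
  "('a, 'b) ring_scheme \<Rightarrow> ('a, 'm, 'c) module_scheme \<Rightarrow> 'm set \<Rightarrow> bool" where
  "pseudo_abs_primary_submodule A M N \<longleftrightarrow>
     submodule N A M \<and> N \<noteq> carrier M \<and> two_absorbing_primary A (mod_colon A M N)"

definition pap_multiplication_module :: "('a, 'b) ring_scheme \<Rightarrow> ('a, 'm, 'c) module_scheme \<Rightarrow> bool" where
  "pap_multiplication_module A M \<longleftrightarrow> module A M \<and>
     (\<forall>N. pseudo_abs_primary_submodule A M N \<longrightarrow> (\<exists>I. ideal I A \<and> N = ideal_mult_mod A I M))"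

definition pullback_ring ::
  "('a, 'c) ring_scheme \<Rightarrow> ('b, 'd) ring_scheme \<Rightarrow> ('a \<Rightarrow> 'e) \<Rightarrow> ('b \<Rightarrow> 'e) \<Rightarrow> ('a \<times> 'b) ring" where
  "pullback_ring R1 R2 V1 V2 =
     \<lparr>carrier = {(r1, r2). r1 \<in> carrier R1 \<and> r2 \<in> carrier R2 \<and> V1 r1 = V2 r2},
      monoid.mult = (\<lambda>x y. (fst x \<otimes>\<^bsub>R1\<^esub> fst y, snd x \<otimes>\<^bsub>R2\<^esub> snd y)),
      one = (\<one>\<^bsub>R1\<^esub>, \<one>\<^bsub>R2\<^esub>),
      ring.zero = (\<zero>\<^bsub>R1\<^esub>, \<zero>\<^bsub>R2\<^esub>),
      ring.add = (\<lambda>x y. (fst x \<oplus>\<^bsub>R1\<^esub> fst y, snd x \<oplus>\<^bsub>R2\<^esub> snd y))\<rparr>"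

text \<open>Quotient S/N (N a submodule of S), made into a module over another ring via a
  lifting of scalars: r acts on a coset X by (q x) + N for any lift q of r and x in X.
  The ring-multiplication fields of the record are irrelevant for modules.\<close>
definition quot_module_lift ::
  "('p, 'm, 'c) module_scheme \<Rightarrow> 'm set \<Rightarrow> ('a \<Rightarrow> 'p set) \<Rightarrow> ('a, 'm set) module" where
  "quot_module_lift S N lift =
     \<lparr>carrier = {N +>\<^bsub>S\<^esub> s | s. s \<in> carrier S},
      monoid.mult = (\<lambda>_ _. N),
      one = N,
      ring.zero = N,
      ring.add = (\<lambda>A B. A <+>\<^bsub>S\<^esub> B),
      smult = (\<lambda>r A. {(q \<odot>\<^bsub>S\<^esub> x) \<oplus>\<^bsub>S\<^esub> n | q x n. q \<in> lift r \<and> x \<in> A \<and> n \<in> N})\<rparr>"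

definition quot_S1 ::
  "('a, 'c) ring_scheme \<Rightarrow> ('b, 'd) ring_scheme \<Rightarrow> ('a \<Rightarrow> 'e) \<Rightarrow> ('b \<Rightarrow> 'e) \<Rightarrow> 'b set
   \<Rightarrow> ('a \<times> 'b, 'm, 'f) module_scheme \<Rightarrow> ('a, 'm set) module" where
  "quot_S1 R1 R2 V1 V2 P2 S =
     quot_module_lift S (ideal_mult_mod (pullback_ring R1 R2 V1 V2) ({\<zero>\<^bsub>R1\<^esub>} \<times> P2) S)
       (\<lambda>r. {(r, r2) | r2. r2 \<in> carrier R2 \<and> V2 r2 = V1 r})"

definition quot_S2 ::
  "('a, 'c) ring_scheme \<Rightarrow> ('b, 'd) ring_scheme \<Rightarrow> ('a \<Rightarrow> 'e) \<Rightarrow> ('b \<Rightarrow> 'e) \<Rightarrow> 'a set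
   \<Rightarrow> ('a \<times> 'b, 'm, 'f) module_scheme \<Rightarrow> ('b, 'm set) module" where
  "quot_S2 R1 R2 V1 V2 P1 S =
     quot_module_lift S (ideal_mult_mod (pullback_ring R1 R2 V1 V2) (P1 \<times> {\<zero>\<^bsub>R2\<^esub>}) S)
       (\<lambda>r. {(r1, r) | r1. r1 \<in> carrier R1 \<and> V1 r1 = V2 r})"

end

theory Submission
  imports Defs
begin

text \<open>
  Over each of the local rings \<open>R\<^sub>1\<close>, \<open>R\<^sub>2\<close> and \<open>R\<close>, every proper ideal is 2-absorbing
  primary: in a discrete valuation domain a nonzero proper ideal has the maximal ideal as
  radical, and in the pullback \<open>R\<close> a proper ideal either has one of the primes
  \<open>P\<^sub>1 \<oplus> P\<^sub>2\<close>, \<open>ker fst\<close>, \<open>ker snd\<close> as radical or is \<open>0 = ker fst \<inter> ker snd\<close>.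
  Hence every proper cyclic submodule is pseudo-absorbing primary, and a Nakayama-type
  argument shows that over such a ring the pseudo-absorbing primary multiplication modules
  are exactly the cyclic modules. It remains to see that \<open>S\<close> is cyclic iff \<open>S\<^sub>1\<close> and \<open>S\<^sub>2\<close>
  are. With \<open>e = (p\<^sub>1, 0)\<close> and \<open>f = (0, p\<^sub>2)\<close> we have \<open>P\<^sub>1S = eS\<close>, \<open>P\<^sub>2S = fS\<close> and
  \<open>ef = 0\<close>; if \<open>S = Rx + fS\<close> and \<open>S = Ry + eS\<close> then \<open>eS = Rex\<close>, so \<open>x = by + cex\<close>, and
  since \<open>1 - ce\<close> is a unit, \<open>x \<in> Ry\<close> and \<open>S = Ry\<close>.
\<close>

section \<open>Ideals of commutative rings\<close>

lemma (in cring) ideal_subset_rad: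
  assumes "I \<subseteq> carrier R" shows "I \<subseteq> rad R I"
proof
  fix a assume "a \<in> I"
  moreover have "a [^] (1::nat) = a"
    using assms \<open>a \<in> I\<close> by auto
  ultimately show "a \<in> rad R I"
    unfolding rad_def using assms by (metis (mono_tags, lifting) mem_Collect_eq subsetD)
qed

lemma (in primeideal) two_pairwise_products_mem:
  assumes "a \<in> carrier R" "b \<in> carrier R" "c \<in> carrier R" "a \<otimes> b \<otimes> c \<in> I"
  shows "a \<otimes> b \<in> I \<and> a \<otimes> c \<in> I \<or> a \<otimes> b \<in> I \<and> b \<otimes> c \<in> I \<or> a \<otimes> c \<in> I \<and> b \<otimes> c \<in> I"
proof -
  have "a \<otimes> b \<in> I \<or> c \<in> I"
    using assms I_prime by blast
  then have "a \<in> I \<or> b \<in> I \<or> c \<in> I"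
    using assms I_prime by blast
  then show ?thesis
    using assms I_l_closed I_r_closed by blast
qed

lemma (in cring) two_absorbing_primary_if_rad_prime:
  assumes I: "ideal I R" "I \<noteq> carrier R"
    and Q: "primeideal Q R" "I \<subseteq> Q" "Q \<subseteq> rad R I"
  shows "two_absorbing_primary R I"
  unfolding two_absorbing_primary_def
proof (intro conjI ballI impI I)
  fix a b c assume "a \<in> carrier R" "b \<in> carrier R" "c \<in> carrier R" "a \<otimes> b \<otimes> c \<in> I"
  then have "a \<otimes> c \<in> Q \<or> b \<otimes> c \<in> Q"
    using primeideal.two_pairwise_products_mem[OF Q(1)] Q(2) by blast
  then show "a \<otimes> b \<in> I \<or> a \<otimes> c \<in> rad R I \<or> b \<otimes> c \<in> rad R I"
    using Q(3) by blast
qed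

lemma (in cring) two_absorbing_primary_Int_primeideals:
  assumes Q: "primeideal Q R" and Q': "primeideal Q' R"
  shows "two_absorbing_primary R (Q \<inter> Q')"
  unfolding two_absorbing_primary_def
proof (intro conjI ballI impI)
  interpret Q: primeideal Q R by fact
  interpret Q': primeideal Q' R by fact
  show "ideal (Q \<inter> Q') R"
    using Q.is_ideal Q'.is_ideal by (rule i_intersect)
  show "Q \<inter> Q' \<noteq> carrier R"
    using Q.I_notcarr Q.Icarr by blast
  fix a b c assume abc: "a \<in> carrier R" "b \<in> carrier R" "c \<in> carrier R" "a \<otimes> b \<otimes> c \<in> Q \<inter> Q'"
  then have "a \<otimes> b \<in> Q \<inter> Q' \<or> a \<otimes> c \<in> Q \<inter> Q' \<or> b \<otimes> c \<in> Q \<inter> Q'"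
    using Q.two_pairwise_products_mem[of a b c] Q'.two_pairwise_products_mem[of a b c] by blast
  then show "a \<otimes> b \<in> Q \<inter> Q' \<or> a \<otimes> c \<in> rad R (Q \<inter> Q') \<or> b \<otimes> c \<in> rad R (Q \<inter> Q')"
    using ideal_subset_rad[of "Q \<inter> Q'"] Q.Icarr by blast
qed

lemma primeideal_kernel:
  assumes "cring R" "domain S" "h \<in> ring_hom R S"
  shows "primeideal (a_kernel R S h) R"
proof -
  interpret R: cring R by fact
  interpret S: domain S by fact
  interpret h: ring_hom_ring R S h
    using R.ring_axioms S.ring_axioms assms(3) by (rule ring_hom_ringI2)
  show ?thesis
  proof (rule primeidealI[OF h.kernel_is_ideal R.is_cring])
    have "\<one>\<^bsub>R\<^esub> \<notin> a_kernel R S h"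
      using a_kernel_def'[of R S h] by simp
    then show "carrier R \<noteq> a_kernel R S h"
      by blast
    fix a b assume "a \<in> carrier R" "b \<in> carrier R" "a \<otimes>\<^bsub>R\<^esub> b \<in> a_kernel R S h"
    then show "a \<in> a_kernel R S h \<or> b \<in> a_kernel R S h"
      using S.integral a_kernel_def'[of R S h] by auto
  qed
qed

lemma (in ideal) Units_imp_carrier:
  assumes "a \<in> I" "a \<in> Units R" shows "I = carrier R"
proof -
  have "inv a \<otimes> a \<in> I"
    using I_l_closed[OF assms(1) Units_inv_closed[OF assms(2)]] .
  then show ?thesis
    using one_imp_carrier Units_l_inv[OF assms(2)] by simp
qed

lemma (in cring) cring_idealI:
  assumes "I \<subseteq> carrier R" "\<zero> \<in> I" "\<And>a b. \<lbrakk>a \<in> I; b \<in> I\<rbrakk> \<Longrightarrow> a \<oplus> b \<in> I"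
    "\<And>a. a \<in> I \<Longrightarrow> \<ominus> a \<in> I" "\<And>a x. \<lbrakk>a \<in> I; x \<in> carrier R\<rbrakk> \<Longrightarrow> x \<otimes> a \<in> I"
  shows "ideal I R"
proof (rule idealI)
  show "subgroup I (add_monoid R)"
    using assms(1-4) by (intro add.subgroupI) (auto simp: a_inv_def)
  show "\<And>a x. \<lbrakk>a \<in> I; x \<in> carrier R\<rbrakk> \<Longrightarrow> a \<otimes> x \<in> I"
    using assms(1,5) m_comm by (metis subsetD)
qed (use assms(5) ring_axioms in auto)

lemma (in cring) prod_divides_pow:
  assumes "p \<in> carrier R" "\<forall>f\<in>set fs. f \<in> carrier R \<and> f divides p"
  shows "foldr (\<otimes>) fs \<one> divides p [^] length fs"
  using assms(2)
proof (induction fs)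
  case Nil
  then show ?case by (simp add: divides_one)
next
  case (Cons f fs)
  have f: "f \<in> carrier R" "f divides p" and fs: "foldr (\<otimes>) fs \<one> \<in> carrier R"
    using Cons.prems by (induction fs) auto
  then have "f \<otimes> foldr (\<otimes>) fs \<one> divides f \<otimes> p [^] length fs"
    using Cons assms(1) by (intro divides_mult_lI) auto
  moreover have "f \<otimes> p [^] length fs divides p \<otimes> p [^] length fs"
    using f assms(1) by (intro divides_mult_rI) auto
  ultimately have "f \<otimes> foldr (\<otimes>) fs \<one> divides p \<otimes> p [^] length fs"
    using divides_trans f fs assms(1) by (meson m_closed nat_pow_closed)
  then show ?case
    using assms(1) by (simp add: nat_pow_Suc2 m_comm)
qed

section \<open>Local principal ideal domains\<close>

locale local_principal_domain = principal_domain +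
  fixes P
  assumes maximalideal_P: "maximalideal P R"
    and maximalideal_unique: "maximalideal Q R \<Longrightarrow> Q = P"

lemma local_principal_domainI:
  assumes "dvr R" "maximalideal P R"
  shows "local_principal_domain R P"
  using assms unfolding dvr_def local_principal_domain_def local_principal_domain_axioms_def
  by blast

lemma dvr_maximalideal_nonzero:
  assumes "dvr R" "maximalideal P R"
  shows "P \<noteq> {\<zero>\<^bsub>R\<^esub>}"
proof
  interpret principal_domain R
    using assms(1) unfolding dvr_def by blast
  assume "P = {\<zero>\<^bsub>R\<^esub>}"
  then show False
    using assms zeromaximalideal_eq_field unfolding dvr_def by simp
qed

context local_principal_domain
begin

lemma ideal_P: "ideal P R"
  using maximalideal_P by (rule maximalideal.axioms(1))

lemma P_neq_carrier: "P \<noteq> carrier R"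
  using maximalideal_P maximalideal.I_notcarr by metis

lemma Units_if_notin_P:
  assumes a: "a \<in> carrier R" "a \<notin> P" shows "a \<in> Units R"
proof (rule ccontr)
  assume "a \<notin> Units R"
  moreover have "a \<noteq> \<zero>"
    using a ideal_P additive_subgroup.zero_closed ideal.axioms(1) by metis
  ultimately obtain b where b: "b \<in> carrier R" "ring_irreducible b" "b divides a"
    using exists_irreducible_divisor[of a] a by blast
  then have "PIdl b = P"
    using irreducible_imp_maximalideal maximalideal_unique by blast
  moreover have "PIdl a \<subseteq> PIdl b"
    using b a(1) to_contain_is_to_divide by blast
  ultimately have "a \<in> P"
    using cgenideal_self[OF a(1)] by blast
  with a show False by blast
qed

lemma proper_ideal_subset_P:
  assumes "ideal I R" "I \<noteq> carrier R" shows "I \<subseteq> P"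
proof
  fix a assume "a \<in> I"
  then show "a \<in> P"
    using assms Units_if_notin_P ideal.Units_imp_carrier[OF assms(1)] ideal.Icarr[OF assms(1)]
    by blast
qed

lemma irreducible_divides_generator:
  assumes p: "p \<in> carrier R" "P = PIdl p" and f: "f \<in> carrier R" "ring_irreducible f"
  shows "f divides p"
proof -
  have "f \<in> P"
    using proper_ideal_subset_P[of "PIdl f"] f cgenideal_ideal cgenideal_self
      ideal_eq_carrier_iff ring_irreducibleE(4) by blast
  then obtain x where x: "x \<in> carrier R" "f = x \<otimes> p"
    using p unfolding cgenideal_def by blast
  have "p \<notin> Units R"
    using p P_neq_carrier ideal_eq_carrier_iff by blast
  then have "x \<in> Units R"
    using ring_irreducibleE(5)[OF f x(1) p(1) x(2)] by blast
  then have "p = inv x \<otimes> f"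
    using x p by (simp add: m_assoc[symmetric])
  then show ?thesis
    using \<open>x \<in> Units R\<close> f(1) m_comm by (metis Units_inv_closed dividesI)
qed

lemma divides_generator_pow:
  assumes p: "p \<in> carrier R" "P = PIdl p" and d: "d \<in> carrier R" "d \<noteq> \<zero>"
  shows "\<exists>n::nat. d divides p [^] n"
proof (cases "d \<in> Units R")
  case True
  then have "d divides p [^] (0::nat)"
    by (simp add: unit_divides)
  then show ?thesis ..
next
  case False
  then obtain fs where fs: "set fs \<subseteq> carrier (mult_of R)" "wfactors (mult_of R) fs d"
    using factorization_property[of d] d by blast
  have "\<forall>f\<in>set fs. f \<in> carrier R \<and> f divides p"
  proof
    fix f assume "f \<in> set fs"
    then have "f \<in> carrier R - {\<zero>}" "irreducible (mult_of R) f"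
      using fs unfolding wfactors_def by auto
    then show "f \<in> carrier R \<and> f divides p"
      using irreducible_divides_generator[OF p] ring_irreducibleI' by blast
  qed
  then have dvd: "foldr (\<otimes>) fs \<one> divides p [^] length fs"
    using prod_divides_pow p by blast
  have "foldr (\<otimes>\<^bsub>mult_of R\<^esub>) fs \<one>\<^bsub>mult_of R\<^esub> \<sim>\<^bsub>mult_of R\<^esub> d"
    using fs unfolding wfactors_def by blast
  moreover have "foldr (\<otimes>) fs \<one> \<in> carrier R"
    using fs(1) by (induction fs) auto
  ultimately have "foldr (\<otimes>) fs \<one> \<sim> d"
    using assoc_iff_assoc_mult d(1) by (metis mult_mult_of one_mult_of)
  then show ?thesis
    using dvd divides_trans d unfolding associated_def by blast
qed

lemma generator_pow_mem:
  assumes p: "p \<in> carrier R" "P = PIdl p" and K: "ideal K R" "K \<noteq> {\<zero>}"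
  shows "\<exists>n::nat. p [^] n \<in> K"
proof -
  obtain d where d: "d \<in> carrier R" "K = PIdl d"
    using exists_gen[OF K(1)] by blast
  then have "d \<noteq> \<zero>"
    using K cgenideal_eq_genideal genideal_zero by auto
  then obtain n :: nat where "d divides p [^] n"
    using divides_generator_pow[OF p d(1)] by blast
  then have "p [^] n \<in> PIdl d"
    using to_contain_is_to_divide d p by (meson cgenideal_self nat_pow_closed subsetD)
  then show ?thesis
    using d by blast
qed

lemma pow_mem_nonzero_ideal:
  assumes K: "ideal K R" "K \<noteq> {\<zero>}"
  shows "\<exists>n::nat. \<forall>a\<in>P. \<forall>k\<ge>n. a [^] k \<in> K"
proof -
  interpret K: ideal K R by fact
  obtain p where p: "p \<in> carrier R" "P = PIdl p"
    using exists_gen[OF ideal_P] by blast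
  obtain n :: nat where n: "p [^] n \<in> K"
    using generator_pow_mem[OF p K] by blast
  have "a [^] k \<in> K" if a: "a \<in> P" and k: "n \<le> k" for a k
  proof -
    obtain y where y: "y \<in> carrier R" "a = y \<otimes> p"
      using a p unfolding cgenideal_def by blast
    have "a [^] n = y [^] n \<otimes> p [^] n"
      using y p by (simp add: nat_pow_distrib)
    then have "a [^] n \<in> K"
      using K.I_l_closed[OF n] y by simp
    then have "a [^] n \<otimes> a [^] (k - n) \<in> K"
      using K.I_r_closed y p by simp
    moreover have "a [^] n \<otimes> a [^] (k - n) = a [^] k"
      using nat_pow_mult[of a n "k - n"] y p k by simp
    ultimately show ?thesis
      by simp
  qed
  then show ?thesis by blast
qed

lemma two_absorbing_primary_proper_ideal:
  assumes I: "ideal I R" "I \<noteq> carrier R"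
  shows "two_absorbing_primary R I"
proof (cases "I = {\<zero>}")
  case True
  then show ?thesis
    using two_absorbing_primary_if_rad_prime[OF I zeroprimeideal] ideal_subset_rad[of I] by simp
next
  case False
  obtain n :: nat where n: "\<forall>a\<in>P. \<forall>k\<ge>n. a [^] k \<in> I"
    using pow_mem_nonzero_ideal[OF I(1) False] by blast
  have "P \<subseteq> rad R I"
  proof
    fix a assume a: "a \<in> P"
    then have "a [^] n \<in> I"
      using n by blast
    moreover have "a \<in> carrier R"
      using a ideal.Icarr[OF ideal_P] by blast
    ultimately show "a \<in> rad R I"
      unfolding rad_def by blast
  qed
  then show ?thesis
    using two_absorbing_primary_if_rad_prime[OF I maximalideal_prime[OF maximalideal_P]]
      proper_ideal_subset_P[OF I] by blast
qed

end

section \<open>Cyclic modules and pseudo-absorbing primary multiplication modules\<close>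

definition cyclic_module :: "('a, 'b) ring_scheme \<Rightarrow> ('a, 'm, 'c) module_scheme \<Rightarrow> bool" where
  "cyclic_module A M \<longleftrightarrow> (\<exists>x\<in>carrier M. \<forall>y\<in>carrier M. \<exists>a\<in>carrier A. y = a \<odot>\<^bsub>M\<^esub> x)"

context module
begin

lemma submodule_zero_closed: "submodule N R M \<Longrightarrow> \<zero>\<^bsub>M\<^esub> \<in> N"
  using subgroup.one_closed[OF submodule.axioms(1)] by fastforce

lemma smult_swap:
  "\<lbrakk>a \<in> carrier R; b \<in> carrier R; x \<in> carrier M\<rbrakk> \<Longrightarrow> a \<odot>\<^bsub>M\<^esub> (b \<odot>\<^bsub>M\<^esub> x) = b \<odot>\<^bsub>M\<^esub> (a \<odot>\<^bsub>M\<^esub> x)"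
  by (metis smult_assoc1 m_comm)

lemma smult_inv_smult:
  assumes u: "u \<in> Units R" and x: "x \<in> carrier M"
  shows "inv u \<odot>\<^bsub>M\<^esub> (u \<odot>\<^bsub>M\<^esub> x) = x"
proof -
  have "inv u \<odot>\<^bsub>M\<^esub> (u \<odot>\<^bsub>M\<^esub> x) = (inv u \<otimes> u) \<odot>\<^bsub>M\<^esub> x"
    using smult_assoc1[OF Units_inv_closed[OF u] Units_closed[OF u] x] by simp
  then show ?thesis
    using u x by simp
qed

lemma submodule_ideal_smult:
  assumes "ideal J R" and x: "x \<in> carrier M"
  shows "submodule {a \<odot>\<^bsub>M\<^esub> x | a. a \<in> J} R M"
proof -
  interpret J: ideal J R by fact
  show ?thesis
  proof (rule submoduleI)
    show "{a \<odot>\<^bsub>M\<^esub> x | a. a \<in> J} \<subseteq> carrier M"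
      using x J.Icarr by auto
    have "\<zero> \<odot>\<^bsub>M\<^esub> x = \<zero>\<^bsub>M\<^esub>"
      using x by simp
    then show "\<zero>\<^bsub>M\<^esub> \<in> {a \<odot>\<^bsub>M\<^esub> x | a. a \<in> J}"
      using J.zero_closed by (metis (mono_tags, lifting) mem_Collect_eq)
  next
    fix u assume "u \<in> {a \<odot>\<^bsub>M\<^esub> x | a. a \<in> J}"
    then obtain a where a: "a \<in> J" "u = a \<odot>\<^bsub>M\<^esub> x" by blast
    then have "\<ominus>\<^bsub>M\<^esub> u = (\<ominus> a) \<odot>\<^bsub>M\<^esub> x"
      using x J.Icarr smult_l_minus by simp
    then show "\<ominus>\<^bsub>M\<^esub> u \<in> {a \<odot>\<^bsub>M\<^esub> x | a. a \<in> J}"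
      using a J.a_inv_closed by blast
  next
    fix u v assume "u \<in> {a \<odot>\<^bsub>M\<^esub> x | a. a \<in> J}" "v \<in> {a \<odot>\<^bsub>M\<^esub> x | a. a \<in> J}"
    then obtain a b where ab: "a \<in> J" "u = a \<odot>\<^bsub>M\<^esub> x" "b \<in> J" "v = b \<odot>\<^bsub>M\<^esub> x" by blast
    then have "u \<oplus>\<^bsub>M\<^esub> v = (a \<oplus> b) \<odot>\<^bsub>M\<^esub> x"
      using x J.Icarr smult_l_distr by simp
    then show "u \<oplus>\<^bsub>M\<^esub> v \<in> {a \<odot>\<^bsub>M\<^esub> x | a. a \<in> J}"
      using ab J.a_closed by blast
  next
    fix c u assume c: "c \<in> carrier R" and "u \<in> {a \<odot>\<^bsub>M\<^esub> x | a. a \<in> J}"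
    then obtain a where a: "a \<in> J" "u = a \<odot>\<^bsub>M\<^esub> x" by blast
    then have "c \<odot>\<^bsub>M\<^esub> u = (c \<otimes> a) \<odot>\<^bsub>M\<^esub> x"
      using x c J.Icarr smult_assoc1 by simp
    then show "c \<odot>\<^bsub>M\<^esub> u \<in> {a \<odot>\<^bsub>M\<^esub> x | a. a \<in> J}"
      using a c J.I_l_closed by blast
  qed
qed

lemma submodule_smult_image:
  assumes c: "c \<in> carrier R"
  shows "submodule {c \<odot>\<^bsub>M\<^esub> x | x. x \<in> carrier M} R M"
proof (rule submoduleI)
  show "{c \<odot>\<^bsub>M\<^esub> x | x. x \<in> carrier M} \<subseteq> carrier M"
    using c by auto
  have "c \<odot>\<^bsub>M\<^esub> \<zero>\<^bsub>M\<^esub> = \<zero>\<^bsub>M\<^esub>"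
    using c by simp
  then show "\<zero>\<^bsub>M\<^esub> \<in> {c \<odot>\<^bsub>M\<^esub> x | x. x \<in> carrier M}"
    by (metis (mono_tags, lifting) mem_Collect_eq M.zero_closed)
next
  fix u assume "u \<in> {c \<odot>\<^bsub>M\<^esub> x | x. x \<in> carrier M}"
  then obtain x where x: "x \<in> carrier M" "u = c \<odot>\<^bsub>M\<^esub> x" by blast
  then have "\<ominus>\<^bsub>M\<^esub> u = c \<odot>\<^bsub>M\<^esub> (\<ominus>\<^bsub>M\<^esub> x)"
    using c smult_r_minus by simp
  then show "\<ominus>\<^bsub>M\<^esub> u \<in> {c \<odot>\<^bsub>M\<^esub> x | x. x \<in> carrier M}"
    using x by blast
next
  fix u v assume "u \<in> {c \<odot>\<^bsub>M\<^esub> x | x. x \<in> carrier M}" "v \<in> {c \<odot>\<^bsub>M\<^esub> x | x. x \<in> carrier M}"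
  then obtain x y where xy: "x \<in> carrier M" "u = c \<odot>\<^bsub>M\<^esub> x" "y \<in> carrier M" "v = c \<odot>\<^bsub>M\<^esub> y" by blast
  then have "u \<oplus>\<^bsub>M\<^esub> v = c \<odot>\<^bsub>M\<^esub> (x \<oplus>\<^bsub>M\<^esub> y)"
    using c smult_r_distr by simp
  then show "u \<oplus>\<^bsub>M\<^esub> v \<in> {c \<odot>\<^bsub>M\<^esub> x | x. x \<in> carrier M}"
    using xy by blast
next
  fix a u assume a: "a \<in> carrier R" and "u \<in> {c \<odot>\<^bsub>M\<^esub> x | x. x \<in> carrier M}"
  then obtain x where x: "x \<in> carrier M" "u = c \<odot>\<^bsub>M\<^esub> x" by blast
  then have "a \<odot>\<^bsub>M\<^esub> u = c \<odot>\<^bsub>M\<^esub> (a \<odot>\<^bsub>M\<^esub> x)"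
    using a c smult_swap by simp
  then show "a \<odot>\<^bsub>M\<^esub> u \<in> {c \<odot>\<^bsub>M\<^esub> x | x. x \<in> carrier M}"
    using a x by blast
qed

lemma submodule_smult_preimage:
  assumes L: "submodule L R M" and c: "c \<in> carrier R"
  shows "submodule {x \<in> carrier M. c \<odot>\<^bsub>M\<^esub> x \<in> L} R M"
proof (rule submoduleI)
  show "\<zero>\<^bsub>M\<^esub> \<in> {x \<in> carrier M. c \<odot>\<^bsub>M\<^esub> x \<in> L}"
    using c submodule_zero_closed[OF L] by simp
next
  fix x assume "x \<in> {x \<in> carrier M. c \<odot>\<^bsub>M\<^esub> x \<in> L}"
  then have "x \<in> carrier M" "\<ominus>\<^bsub>M\<^esub> (c \<odot>\<^bsub>M\<^esub> x) \<in> L"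
    using submoduleE(3)[OF L] by auto
  then show "\<ominus>\<^bsub>M\<^esub> x \<in> {x \<in> carrier M. c \<odot>\<^bsub>M\<^esub> x \<in> L}"
    using c smult_r_minus by simp
next
  fix x y assume "x \<in> {x \<in> carrier M. c \<odot>\<^bsub>M\<^esub> x \<in> L}" "y \<in> {x \<in> carrier M. c \<odot>\<^bsub>M\<^esub> x \<in> L}"
  then have "x \<in> carrier M" "y \<in> carrier M" "c \<odot>\<^bsub>M\<^esub> x \<oplus>\<^bsub>M\<^esub> c \<odot>\<^bsub>M\<^esub> y \<in> L"
    using submoduleE(5)[OF L] by auto
  then show "x \<oplus>\<^bsub>M\<^esub> y \<in> {x \<in> carrier M. c \<odot>\<^bsub>M\<^esub> x \<in> L}"
    using c smult_r_distr by simp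
next
  fix a x assume "a \<in> carrier R" "x \<in> {x \<in> carrier M. c \<odot>\<^bsub>M\<^esub> x \<in> L}"
  then have "a \<in> carrier R" "x \<in> carrier M" "a \<odot>\<^bsub>M\<^esub> (c \<odot>\<^bsub>M\<^esub> x) \<in> L"
    using submoduleE(4)[OF L] by auto
  then show "a \<odot>\<^bsub>M\<^esub> x \<in> {x \<in> carrier M. c \<odot>\<^bsub>M\<^esub> x \<in> L}"
    using c smult_swap[of a c x] by simp
qed auto

lemma submodule_ideal_mult_mod:
  assumes "I \<subseteq> carrier R" shows "submodule (ideal_mult_mod R I M) R M"
proof -
  let ?F = "{N. submodule N R M \<and> (\<forall>a\<in>I. \<forall>m\<in>carrier M. a \<odot>\<^bsub>M\<^esub> m \<in> N)}"
  have carrier: "carrier M \<in> ?F"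
    using carrier_is_submodule assms by auto
  have sub: "\<And>N. N \<in> ?F \<Longrightarrow> submodule N R M"
    by blast
  show ?thesis
    unfolding ideal_mult_mod_def
  proof (rule submoduleI)
    show "\<Inter>?F \<subseteq> carrier M"
      using carrier by blast
    show "\<zero>\<^bsub>M\<^esub> \<in> \<Inter>?F"
      using sub submodule_zero_closed by blast
    show "\<And>a. a \<in> \<Inter>?F \<Longrightarrow> \<ominus>\<^bsub>M\<^esub> a \<in> \<Inter>?F"
      using sub submoduleE(3) by blast
    show "\<And>a b. a \<in> \<Inter>?F \<Longrightarrow> b \<in> \<Inter>?F \<Longrightarrow> a \<oplus>\<^bsub>M\<^esub> b \<in> \<Inter>?F"
      using sub submoduleE(5) by blast
    show "\<And>a x. a \<in> carrier R \<Longrightarrow> x \<in> \<Inter>?F \<Longrightarrow> a \<odot>\<^bsub>M\<^esub> x \<in> \<Inter>?F"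
      using sub submoduleE(4) by blast
  qed
qed

lemma ideal_mult_mod_memI: "\<lbrakk>a \<in> I; m \<in> carrier M\<rbrakk> \<Longrightarrow> a \<odot>\<^bsub>M\<^esub> m \<in> ideal_mult_mod R I M"
  unfolding ideal_mult_mod_def by blast

lemma ideal_mult_mod_least:
  "\<lbrakk>submodule N R M; \<And>a m. \<lbrakk>a \<in> I; m \<in> carrier M\<rbrakk> \<Longrightarrow> a \<odot>\<^bsub>M\<^esub> m \<in> N\<rbrakk>
    \<Longrightarrow> ideal_mult_mod R I M \<subseteq> N"
  unfolding ideal_mult_mod_def by blast

lemma ideal_mult_mod_mono: "I \<subseteq> J \<Longrightarrow> ideal_mult_mod R I M \<subseteq> ideal_mult_mod R J M"
  unfolding ideal_mult_mod_def by blast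

lemma ideal_mult_mod_cgenideal:
  assumes "e \<in> carrier R"
  shows "ideal_mult_mod R (PIdl e) M = {e \<odot>\<^bsub>M\<^esub> x | x. x \<in> carrier M}"
proof
  show "ideal_mult_mod R (PIdl e) M \<subseteq> {e \<odot>\<^bsub>M\<^esub> x | x. x \<in> carrier M}"
  proof (rule ideal_mult_mod_least[OF submodule_smult_image[OF assms]])
    fix a m assume "a \<in> PIdl e" "m \<in> carrier M"
    then obtain b where "b \<in> carrier R" "a = b \<otimes> e" "m \<in> carrier M"
      unfolding cgenideal_def by blast
    then have "a \<odot>\<^bsub>M\<^esub> m = e \<odot>\<^bsub>M\<^esub> (b \<odot>\<^bsub>M\<^esub> m)"
      using assms smult_assoc1 smult_swap by simp
    then show "a \<odot>\<^bsub>M\<^esub> m \<in> {e \<odot>\<^bsub>M\<^esub> x | x. x \<in> carrier M}"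
      using \<open>b \<in> carrier R\<close> \<open>m \<in> carrier M\<close> by blast
  qed
  show "{e \<odot>\<^bsub>M\<^esub> x | x. x \<in> carrier M} \<subseteq> ideal_mult_mod R (PIdl e) M"
    using assms cgenideal_self ideal_mult_mod_memI by blast
qed

lemma ideal_mod_colon:
  assumes N: "submodule N R M" shows "ideal (mod_colon R M N) R"
proof (rule cring_idealI)
  show "mod_colon R M N \<subseteq> carrier R"
    unfolding mod_colon_def by blast
  show "\<zero> \<in> mod_colon R M N"
    unfolding mod_colon_def using submodule_zero_closed[OF N] by simp
next
  fix a b assume "a \<in> mod_colon R M N" "b \<in> mod_colon R M N"
  then show "a \<oplus> b \<in> mod_colon R M N"
    unfolding mod_colon_def using submoduleE(5)[OF N] by (simp add: smult_l_distr)
next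
  fix a assume "a \<in> mod_colon R M N"
  then show "\<ominus> a \<in> mod_colon R M N"
    unfolding mod_colon_def using submoduleE(3)[OF N] by (simp add: smult_l_minus)
next
  fix a x assume "a \<in> mod_colon R M N" "x \<in> carrier R"
  then show "x \<otimes> a \<in> mod_colon R M N"
    unfolding mod_colon_def using submoduleE(4)[OF N] by (simp add: smult_assoc1)
qed

lemma submodule_eq_ideal_mult_mod_colon:
  assumes cyc: "cyclic_module R M" and N: "submodule N R M"
  shows "N = ideal_mult_mod R (mod_colon R M N) M"
proof
  show "ideal_mult_mod R (mod_colon R M N) M \<subseteq> N"
    by (rule ideal_mult_mod_least[OF N]) (auto simp: mod_colon_def)
  obtain x where x: "x \<in> carrier M" "\<And>y. y \<in> carrier M \<Longrightarrow> \<exists>a\<in>carrier R. y = a \<odot>\<^bsub>M\<^esub> x"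
    using cyc unfolding cyclic_module_def by blast
  show "N \<subseteq> ideal_mult_mod R (mod_colon R M N) M"
  proof
    fix n assume n: "n \<in> N"
    then obtain r where r: "r \<in> carrier R" "n = r \<odot>\<^bsub>M\<^esub> x"
      using x(2) submoduleE(1)[OF N] by blast
    have "r \<odot>\<^bsub>M\<^esub> m \<in> N" if "m \<in> carrier M" for m
    proof -
      obtain s where s: "s \<in> carrier R" "m = s \<odot>\<^bsub>M\<^esub> x"
        using x(2) \<open>m \<in> carrier M\<close> by blast
      then have "r \<odot>\<^bsub>M\<^esub> m = s \<odot>\<^bsub>M\<^esub> n"
        using r x(1) smult_swap by simp
      then show ?thesis
        using submoduleE(4)[OF N] s(1) n by simp
    qed
    then have "r \<in> mod_colon R M N"
      unfolding mod_colon_def using r(1) by blast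
    then show "n \<in> ideal_mult_mod R (mod_colon R M N) M"
      using ideal_mult_mod_memI r x(1) by simp
  qed
qed

lemma pap_multiplication_module_if_cyclic:
  assumes "cyclic_module R M" shows "pap_multiplication_module R M"
  unfolding pap_multiplication_module_def
proof (intro conjI allI impI)
  show "module R M" by (rule module_axioms)
  fix N assume "pseudo_abs_primary_submodule R M N"
  then have N: "submodule N R M"
    unfolding pseudo_abs_primary_submodule_def by blast
  show "\<exists>I. ideal I R \<and> N = ideal_mult_mod R I M"
    using submodule_eq_ideal_mult_mod_colon[OF assms N] ideal_mod_colon[OF N] by blast
qed

lemma ideal_mult_mod_eq_carrier_if_Units:
  assumes "I \<subseteq> carrier R" "a \<in> I" "a \<in> Units R"
  shows "ideal_mult_mod R I M = carrier M"
proof -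
  have "y \<in> ideal_mult_mod R I M" if y: "y \<in> carrier M" for y
  proof -
    have "inv a \<odot>\<^bsub>M\<^esub> (a \<odot>\<^bsub>M\<^esub> y) \<in> ideal_mult_mod R I M"
      using ideal_mult_mod_memI[OF assms(2) y] submoduleE(4)[OF submodule_ideal_mult_mod[OF assms(1)]]
        assms(3) by simp
    then show ?thesis
      using smult_inv_smult[OF assms(3) y] by simp
  qed
  then show ?thesis
    using submoduleE(1)[OF submodule_ideal_mult_mod[OF assms(1)]] by blast
qed

lemma multiples_eq_ideal_mult_mod_if_pap:
  assumes local: "\<And>a. \<lbrakk>a \<in> carrier R; a \<notin> m\<rbrakk> \<Longrightarrow> a \<in> Units R"
    and tap: "\<And>I. \<lbrakk>ideal I R; I \<noteq> carrier R\<rbrakk> \<Longrightarrow> two_absorbing_primary R I"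
    and pap: "pap_multiplication_module R M"
    and x: "x \<in> carrier M" "{a \<odot>\<^bsub>M\<^esub> x | a. a \<in> carrier R} \<noteq> carrier M"
  shows "\<exists>I \<subseteq> m. {a \<odot>\<^bsub>M\<^esub> x | a. a \<in> carrier R} = ideal_mult_mod R I M"
proof -
  let ?Rx = "{a \<odot>\<^bsub>M\<^esub> x | a. a \<in> carrier R}"
  have sub: "submodule ?Rx R M"
    using submodule_ideal_smult[OF oneideal x(1)] .
  have "\<one> \<notin> mod_colon R M ?Rx"
    using x(2) submoduleE(1)[OF sub] unfolding mod_colon_def by auto
  then have "mod_colon R M ?Rx \<noteq> carrier R"
    by blast
  then have "pseudo_abs_primary_submodule R M ?Rx"
    unfolding pseudo_abs_primary_submodule_def using sub x(2) tap ideal_mod_colon by blast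
  then obtain I where I: "ideal I R" "?Rx = ideal_mult_mod R I M"
    using pap unfolding pap_multiplication_module_def by blast
  have "I \<subseteq> m"
    using local ideal_mult_mod_eq_carrier_if_Units[of I] I x(2) ideal.Icarr[OF I(1)] by blast
  then show ?thesis
    using I(2) by blast
qed

lemma smult_mem_maximal_multiples:
  assumes m: "ideal m R" and mM: "carrier M \<subseteq> ideal_mult_mod R m M"
    and x: "x \<in> carrier M" and a: "a \<in> carrier R"
    and aM: "\<And>z. z \<in> carrier M \<Longrightarrow> \<exists>c\<in>carrier R. a \<odot>\<^bsub>M\<^esub> z = c \<odot>\<^bsub>M\<^esub> x"
    and y: "y \<in> carrier M"
  shows "\<exists>b\<in>m. a \<odot>\<^bsub>M\<^esub> y = b \<odot>\<^bsub>M\<^esub> x"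
proof -
  interpret m: ideal m R by fact
  let ?mx = "{b \<odot>\<^bsub>M\<^esub> x | b. b \<in> m}"
  \<comment> \<open>since M = mM, we get a M \<subseteq> m (a M) \<subseteq> m x\<close>
  have "ideal_mult_mod R m M \<subseteq> {z \<in> carrier M. a \<odot>\<^bsub>M\<^esub> z \<in> ?mx}"
  proof (rule ideal_mult_mod_least[OF submodule_smult_preimage[OF submodule_ideal_smult[OF m x] a]])
    fix b z assume b: "b \<in> m" and z: "z \<in> carrier M"
    have bc: "b \<in> carrier R"
      using b m.Icarr by blast
    obtain c where c: "c \<in> carrier R" "a \<odot>\<^bsub>M\<^esub> z = c \<odot>\<^bsub>M\<^esub> x"
      using aM[OF z] by blast
    have "a \<odot>\<^bsub>M\<^esub> (b \<odot>\<^bsub>M\<^esub> z) = (b \<otimes> c) \<odot>\<^bsub>M\<^esub> x"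
      using a bc c z x by (simp add: smult_swap[of a b] smult_assoc1)
    moreover have "b \<otimes> c \<in> m"
      using b c(1) by (rule m.I_r_closed)
    ultimately show "b \<odot>\<^bsub>M\<^esub> z \<in> {z \<in> carrier M. a \<odot>\<^bsub>M\<^esub> z \<in> ?mx}"
      using bc z by blast
  qed
  then show ?thesis
    using mM y by blast
qed

lemma eq_zero_if_smult_eq_self:
  assumes m: "ideal m R" "m \<noteq> carrier R"
    and local: "\<And>a. \<lbrakk>a \<in> carrier R; a \<notin> m\<rbrakk> \<Longrightarrow> a \<in> Units R"
    and b: "b \<in> m" and x: "x \<in> carrier M" "b \<odot>\<^bsub>M\<^esub> x = x"
  shows "x = \<zero>\<^bsub>M\<^esub>"
proof -
  interpret m: ideal m R by fact
  have bc: "b \<in> carrier R"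
    using b m.Icarr by blast
  have "\<one> \<ominus> b \<notin> m"
  proof
    assume "\<one> \<ominus> b \<in> m"
    then have "(\<one> \<ominus> b) \<oplus> b \<in> m"
      using m.a_closed b by blast
    moreover have "(\<one> \<ominus> b) \<oplus> b = \<one>"
      using bc R.a_assoc[of \<one> "\<ominus> b" b] R.l_neg[OF bc] by (simp add: a_minus_def)
    ultimately show False
      using m.one_imp_carrier m(2) by simp
  qed
  then have u: "\<one> \<ominus> b \<in> Units R"
    using local bc by blast
  have "(\<one> \<ominus> b) \<odot>\<^bsub>M\<^esub> x = x \<ominus>\<^bsub>M\<^esub> b \<odot>\<^bsub>M\<^esub> x"
    using bc x by (simp add: a_minus_def smult_l_distr smult_l_minus)
  also have "\<dots> = \<zero>\<^bsub>M\<^esub>"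
    using x by (simp add: a_minus_def M.r_neg)
  finally show ?thesis
    using smult_inv_smult[OF u x(1)] u by simp
qed

lemma cyclic_if_pap_multiplication_module:
  assumes m: "ideal m R" "m \<noteq> carrier R"
    and local: "\<And>a. \<lbrakk>a \<in> carrier R; a \<notin> m\<rbrakk> \<Longrightarrow> a \<in> Units R"
    and tap: "\<And>I. \<lbrakk>ideal I R; I \<noteq> carrier R\<rbrakk> \<Longrightarrow> two_absorbing_primary R I"
    and pap: "pap_multiplication_module R M"
  shows "cyclic_module R M"
proof (cases "\<exists>x\<in>carrier M. {a \<odot>\<^bsub>M\<^esub> x | a. a \<in> carrier R} = carrier M")
  case True
  then show ?thesis
    unfolding cyclic_module_def by blast
next
  case False
  \<comment> \<open>every cyclic submodule R x is then I M with I \<subseteq> m, so M = m M, and a Nakayama-type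
    argument gives x \<in> m x, whence x = 0\<close>
  have Rx: "\<exists>I \<subseteq> m. {a \<odot>\<^bsub>M\<^esub> x | a. a \<in> carrier R} = ideal_mult_mod R I M"
    if "x \<in> carrier M" for x
    using multiples_eq_ideal_mult_mod_if_pap[OF local tap pap that] False that by blast
  have x_mem: "x \<in> {a \<odot>\<^bsub>M\<^esub> x | a. a \<in> carrier R}" if "x \<in> carrier M" for x
    using that smult_one[OF that] by (metis (mono_tags, lifting) mem_Collect_eq one_closed)
  have mM: "carrier M \<subseteq> ideal_mult_mod R m M"
    using Rx x_mem ideal_mult_mod_mono by blast
  have "x = \<zero>\<^bsub>M\<^esub>" if x: "x \<in> carrier M" for x
  proof -
    obtain I where I: "I \<subseteq> m" "{a \<odot>\<^bsub>M\<^esub> x | a. a \<in> carrier R} = ideal_mult_mod R I M"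
      using Rx[OF x] by blast
    have "ideal_mult_mod R I M \<subseteq> {b \<odot>\<^bsub>M\<^esub> x | b. b \<in> m}"
    proof (rule ideal_mult_mod_least[OF submodule_ideal_smult[OF m(1) x]])
      fix a y assume "a \<in> I" "y \<in> carrier M"
      moreover have "\<exists>c\<in>carrier R. a \<odot>\<^bsub>M\<^esub> z = c \<odot>\<^bsub>M\<^esub> x" if "z \<in> carrier M" for z
        using ideal_mult_mod_memI[OF \<open>a \<in> I\<close> that] I(2) by blast
      ultimately show "a \<odot>\<^bsub>M\<^esub> y \<in> {b \<odot>\<^bsub>M\<^esub> x | b. b \<in> m}"
        using smult_mem_maximal_multiples[OF m(1) mM x] I(1) ideal.Icarr[OF m(1)] by blast
    qed
    then obtain b where "b \<in> m" "x = b \<odot>\<^bsub>M\<^esub> x"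
      using x_mem[OF x] I(2) by blast
    then show ?thesis
      using eq_zero_if_smult_eq_self[OF m local _ x] by simp
  qed
  then have "y = \<zero> \<odot>\<^bsub>M\<^esub> \<zero>\<^bsub>M\<^esub>" if "y \<in> carrier M" for y
    using that by simp
  then show ?thesis
    unfolding cyclic_module_def using zero_closed M.zero_closed by blast
qed

lemma pap_multiplication_module_iff_cyclic:
  assumes "ideal m R" "m \<noteq> carrier R"
    and "\<And>a. \<lbrakk>a \<in> carrier R; a \<notin> m\<rbrakk> \<Longrightarrow> a \<in> Units R"
    and "\<And>I. \<lbrakk>ideal I R; I \<noteq> carrier R\<rbrakk> \<Longrightarrow> two_absorbing_primary R I"
  shows "pap_multiplication_module R M \<longleftrightarrow> cyclic_module R M"
  using cyclic_if_pap_multiplication_module[OF assms] pap_multiplication_module_if_cyclic by blast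

lemma cyclic_module_if_generated_modulo:
  assumes e: "e \<in> carrier R" and f: "f \<in> carrier R" and ef: "e \<otimes> f = \<zero>"
    and Units: "\<And>c. c \<in> carrier R \<Longrightarrow> \<one> \<ominus> c \<otimes> e \<in> Units R"
    and x: "x \<in> carrier M" "\<And>s. s \<in> carrier M \<Longrightarrow> \<exists>a\<in>carrier R. \<exists>t\<in>carrier M. s = a \<odot>\<^bsub>M\<^esub> x \<oplus>\<^bsub>M\<^esub> f \<odot>\<^bsub>M\<^esub> t"
    and y: "y \<in> carrier M" "\<And>s. s \<in> carrier M \<Longrightarrow> \<exists>b\<in>carrier R. \<exists>t\<in>carrier M. s = b \<odot>\<^bsub>M\<^esub> y \<oplus>\<^bsub>M\<^esub> e \<odot>\<^bsub>M\<^esub> t"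
  shows "cyclic_module R M"
proof -
  \<comment> \<open>M = R x + f M and e f = 0 give e M = R e x\<close>
  have eM: "\<exists>c\<in>carrier R. e \<odot>\<^bsub>M\<^esub> t = c \<odot>\<^bsub>M\<^esub> (e \<odot>\<^bsub>M\<^esub> x)" if t: "t \<in> carrier M" for t
  proof -
    obtain a u where au: "a \<in> carrier R" "u \<in> carrier M" "t = a \<odot>\<^bsub>M\<^esub> x \<oplus>\<^bsub>M\<^esub> f \<odot>\<^bsub>M\<^esub> u"
      using x(2)[OF t] by blast
    have "e \<odot>\<^bsub>M\<^esub> t = e \<odot>\<^bsub>M\<^esub> (a \<odot>\<^bsub>M\<^esub> x) \<oplus>\<^bsub>M\<^esub> (e \<otimes> f) \<odot>\<^bsub>M\<^esub> u"
      using au e f x(1) by (simp add: smult_r_distr smult_assoc1)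
    also have "\<dots> = a \<odot>\<^bsub>M\<^esub> (e \<odot>\<^bsub>M\<^esub> x)"
      using au e x(1) ef by (simp add: smult_swap)
    finally show ?thesis
      using au(1) by blast
  qed
  \<comment> \<open>hence x = b y + c e x, and 1 - c e is a unit, so x \<in> R y\<close>
  obtain b t where bt: "b \<in> carrier R" "t \<in> carrier M" "x = b \<odot>\<^bsub>M\<^esub> y \<oplus>\<^bsub>M\<^esub> e \<odot>\<^bsub>M\<^esub> t"
    using y(2)[OF x(1)] by blast
  obtain c where c: "c \<in> carrier R" "e \<odot>\<^bsub>M\<^esub> t = (c \<otimes> e) \<odot>\<^bsub>M\<^esub> x"
    using eM[OF bt(2)] e x(1) by (auto simp: smult_assoc1)
  define u where "u = \<one> \<ominus> c \<otimes> e"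
  have u: "u \<in> Units R"
    unfolding u_def using Units c(1) .
  have "u \<odot>\<^bsub>M\<^esub> x = (b \<odot>\<^bsub>M\<^esub> y \<oplus>\<^bsub>M\<^esub> (c \<otimes> e) \<odot>\<^bsub>M\<^esub> x) \<ominus>\<^bsub>M\<^esub> (c \<otimes> e) \<odot>\<^bsub>M\<^esub> x"
    unfolding u_def using bt c e x(1) by (simp add: a_minus_def smult_l_distr smult_l_minus)
  also have "\<dots> = b \<odot>\<^bsub>M\<^esub> y"
    using bt(1) c(1) e x(1) y(1) by (simp add: a_minus_def M.a_assoc M.r_neg)
  finally have "x = (inv u \<otimes> b) \<odot>\<^bsub>M\<^esub> y"
    using smult_inv_smult[OF u x(1)] u bt(1) y(1) by (simp add: smult_assoc1)
  \<comment> \<open>so M = R y + e M = R y + R e x \<subseteq> R y\<close>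
  have "\<exists>a\<in>carrier R. s = a \<odot>\<^bsub>M\<^esub> y" if s: "s \<in> carrier M" for s
  proof -
    obtain b' t' where bt': "b' \<in> carrier R" "t' \<in> carrier M" "s = b' \<odot>\<^bsub>M\<^esub> y \<oplus>\<^bsub>M\<^esub> e \<odot>\<^bsub>M\<^esub> t'"
      using y(2)[OF s] by blast
    obtain c' where c': "c' \<in> carrier R" "e \<odot>\<^bsub>M\<^esub> t' = c' \<odot>\<^bsub>M\<^esub> (e \<odot>\<^bsub>M\<^esub> x)"
      using eM[OF bt'(2)] by blast
    have "s = (b' \<oplus> c' \<otimes> e \<otimes> (inv u \<otimes> b)) \<odot>\<^bsub>M\<^esub> y"
      using bt' c' e u bt(1) y(1) \<open>x = (inv u \<otimes> b) \<odot>\<^bsub>M\<^esub> y\<close>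
      by (simp add: smult_l_distr smult_assoc1)
    then show ?thesis
      using bt'(1) c'(1) e u bt(1) by blast
  qed
  then show ?thesis
    unfolding cyclic_module_def using y(1) by blast
qed

end

section \<open>Quotient modules over a quotient ring\<close>

text \<open>
  \<open>M/N\<close> as a module over \<open>A\<close>, where \<open>h : R \<rightarrow> A\<close> is onto and \<open>N \<supseteq> (ker h) M\<close>: an
  element of \<open>A\<close> acts through any of its preimages (the set \<open>lift r\<close>). This is how
  \<open>quot_S1\<close> makes \<open>S/P\<^sub>2S\<close> an \<open>R\<^sub>1\<close>-module, with \<open>h = fst\<close>.
\<close>

locale lifted_quotient_module = module R M + h: ring_hom_cring R A h
  for R :: "('a, 'b) ring_scheme" and M :: "('a, 'c, 'd) module_scheme" (structure)
    and A :: "('x, 'y) ring_scheme" and h +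
  fixes N lift
  assumes surj: "h ` carrier R = carrier A"
    and submodule_N: "submodule N R M"
    and kernel_smult_mem: "\<And>q m. \<lbrakk>q \<in> a_kernel R A h; m \<in> carrier M\<rbrakk> \<Longrightarrow> q \<odot>\<^bsub>M\<^esub> m \<in> N"
    and lift_eq: "\<And>r. r \<in> carrier A \<Longrightarrow> lift r = {q \<in> carrier R. h q = r}"
begin

abbreviation Q where "Q \<equiv> quot_module_lift M N lift"

sublocale N: abelian_subgroup N M
  using submodule_N abelian_group_axioms
  by (intro abelian_subgroupI3 additive_subgroup.intro) (auto dest: submodule.axioms(1))

lemma Q_carrier: "carrier Q = {N +>\<^bsub>M\<^esub> s | s. s \<in> carrier M}"
  by (simp add: quot_module_lift_def)

lemma Q_add: "K \<oplus>\<^bsub>Q\<^esub> L = K <+>\<^bsub>M\<^esub> L"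
  by (simp add: quot_module_lift_def)

lemma Q_zero: "\<zero>\<^bsub>Q\<^esub> = N"
  by (simp add: quot_module_lift_def)

lemma Q_cases:
  assumes "K \<in> carrier Q" obtains s where "s \<in> carrier M" "K = N +>\<^bsub>M\<^esub> s"
  using assms Q_carrier by blast

lemma A_cases:
  assumes "r \<in> carrier A" obtains q where "q \<in> carrier R" "r = h q"
  using assms surj by blast

lemma coset_add: "\<lbrakk>s \<in> carrier M; t \<in> carrier M\<rbrakk> \<Longrightarrow> (N +>\<^bsub>M\<^esub> s) \<oplus>\<^bsub>Q\<^esub> (N +>\<^bsub>M\<^esub> t) = N +>\<^bsub>M\<^esub> (s \<oplus>\<^bsub>M\<^esub> t)"
  by (simp add: Q_add N.a_rcos_sum)

lemma coset_smult:
  assumes q: "q \<in> carrier R" and s: "s \<in> carrier M"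
  shows "h q \<odot>\<^bsub>Q\<^esub> (N +>\<^bsub>M\<^esub> s) = N +>\<^bsub>M\<^esub> (q \<odot>\<^bsub>M\<^esub> s)"
proof -
  have lift: "lift (h q) = {q' \<in> carrier R. h q' = h q}"
    using lift_eq q by simp
  have "q' \<odot>\<^bsub>M\<^esub> x \<oplus>\<^bsub>M\<^esub> n \<in> N +>\<^bsub>M\<^esub> (q \<odot>\<^bsub>M\<^esub> s)"
    if q': "q' \<in> carrier R" "h q' = h q" and x: "x \<in> N +>\<^bsub>M\<^esub> s" and n: "n \<in> N" for q' x n
  proof -
    \<comment> \<open>write q' = d + q with h d = 0 and x = n' + s\<close>
    obtain n' where n': "n' \<in> N" "x = n' \<oplus>\<^bsub>M\<^esub> s"
      using x unfolding a_r_coset_def' by blast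
    define d where "d = q' \<ominus>\<^bsub>R\<^esub> q"
    have d: "d \<in> a_kernel R A h" "q' = d \<oplus>\<^bsub>R\<^esub> q"
      using q q' unfolding d_def a_kernel_def'
      by (auto simp: a_minus_def R.a_assoc R.l_neg h.S.r_neg)
    have nc: "n \<in> carrier M" "n' \<in> carrier M"
      using n n'(1) N.a_subset by auto
    have dc: "d \<in> carrier R"
      using d(1) unfolding a_kernel_def' by blast
    have "q' \<odot>\<^bsub>M\<^esub> x \<oplus>\<^bsub>M\<^esub> n = (d \<odot>\<^bsub>M\<^esub> x \<oplus>\<^bsub>M\<^esub> q \<odot>\<^bsub>M\<^esub> n' \<oplus>\<^bsub>M\<^esub> n) \<oplus>\<^bsub>M\<^esub> q \<odot>\<^bsub>M\<^esub> s"
      using d(2) dc q s nc n'(2) by (simp add: smult_l_distr smult_r_distr M.a_ac)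
    moreover have "d \<odot>\<^bsub>M\<^esub> x \<oplus>\<^bsub>M\<^esub> q \<odot>\<^bsub>M\<^esub> n' \<oplus>\<^bsub>M\<^esub> n \<in> N"
      using kernel_smult_mem[OF d(1)] n'(2) nc s q n n'(1) submoduleE(4,5)[OF submodule_N]
      by simp
    ultimately show ?thesis
      unfolding a_r_coset_def' by blast
  qed
  moreover have "y \<in> h q \<odot>\<^bsub>Q\<^esub> (N +>\<^bsub>M\<^esub> s)" if y: "y \<in> N +>\<^bsub>M\<^esub> (q \<odot>\<^bsub>M\<^esub> s)" for y
  proof -
    obtain n where n: "n \<in> N" "y = n \<oplus>\<^bsub>M\<^esub> q \<odot>\<^bsub>M\<^esub> s"
      using y unfolding a_r_coset_def' by blast
    then have "y = q \<odot>\<^bsub>M\<^esub> s \<oplus>\<^bsub>M\<^esub> n"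
      using q s N.a_subset M.a_comm by auto
    then show ?thesis
      using q n(1) N.a_rcos_self[OF s] lift by (auto simp: quot_module_lift_def)
  qed
  ultimately show ?thesis
    using lift by (auto simp: quot_module_lift_def)
qed

lemma Q_zero_coset: "\<zero>\<^bsub>Q\<^esub> = N +>\<^bsub>M\<^esub> \<zero>\<^bsub>M\<^esub>"
  using N.a_rcos_const[OF N.zero_closed] by (simp add: Q_zero)

lemma abelian_group_Q: "abelian_group Q"
proof (rule abelian_groupI)
  fix K L assume "K \<in> carrier Q" "L \<in> carrier Q"
  then obtain s t where "s \<in> carrier M" "K = N +>\<^bsub>M\<^esub> s" "t \<in> carrier M" "L = N +>\<^bsub>M\<^esub> t"
    by (metis Q_cases)
  then show "K \<oplus>\<^bsub>Q\<^esub> L \<in> carrier Q" "K \<oplus>\<^bsub>Q\<^esub> L = L \<oplus>\<^bsub>Q\<^esub> K"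
    by (auto simp: coset_add Q_carrier M.a_comm)
next
  fix K L K' assume "K \<in> carrier Q" "L \<in> carrier Q" "K' \<in> carrier Q"
  then show "K \<oplus>\<^bsub>Q\<^esub> L \<oplus>\<^bsub>Q\<^esub> K' = K \<oplus>\<^bsub>Q\<^esub> (L \<oplus>\<^bsub>Q\<^esub> K')"
    by (elim Q_cases) (simp add: coset_add M.a_assoc)
next
  show "\<zero>\<^bsub>Q\<^esub> \<in> carrier Q"
    using Q_zero_coset Q_carrier by auto
  fix K assume "K \<in> carrier Q"
  then obtain s where s: "s \<in> carrier M" "K = N +>\<^bsub>M\<^esub> s"
    by (rule Q_cases)
  then show "\<zero>\<^bsub>Q\<^esub> \<oplus>\<^bsub>Q\<^esub> K = K"
    by (simp add: Q_zero_coset coset_add)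
  have "(N +>\<^bsub>M\<^esub> \<ominus>\<^bsub>M\<^esub> s) \<oplus>\<^bsub>Q\<^esub> K = \<zero>\<^bsub>Q\<^esub>"
    using s by (simp add: Q_zero_coset coset_add M.l_neg)
  then show "\<exists>L\<in>carrier Q. L \<oplus>\<^bsub>Q\<^esub> K = \<zero>\<^bsub>Q\<^esub>"
    using s(1) Q_carrier by (metis (mono_tags, lifting) M.a_inv_closed mem_Collect_eq)
qed

lemma module_Q: "module A Q"
proof (rule moduleI[OF h.S.is_cring abelian_group_Q])
  fix r K assume "r \<in> carrier A" "K \<in> carrier Q"
  then obtain q s where "q \<in> carrier R" "r = h q" "s \<in> carrier M" "K = N +>\<^bsub>M\<^esub> s"
    by (metis A_cases Q_cases)
  then show "r \<odot>\<^bsub>Q\<^esub> K \<in> carrier Q"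
    by (auto simp: coset_smult Q_carrier)
next
  fix r r' K assume "r \<in> carrier A" "r' \<in> carrier A" "K \<in> carrier Q"
  then obtain q q' s where "q \<in> carrier R" "r = h q" "q' \<in> carrier R" "r' = h q'"
    "s \<in> carrier M" "K = N +>\<^bsub>M\<^esub> s"
    by (metis A_cases Q_cases)
  then show "(r \<oplus>\<^bsub>A\<^esub> r') \<odot>\<^bsub>Q\<^esub> K = r \<odot>\<^bsub>Q\<^esub> K \<oplus>\<^bsub>Q\<^esub> r' \<odot>\<^bsub>Q\<^esub> K"
    by (simp add: coset_smult coset_add smult_l_distr flip: h.hom_add)
next
  fix r K L assume "r \<in> carrier A" "K \<in> carrier Q" "L \<in> carrier Q"
  then obtain q s t where "q \<in> carrier R" "r = h q" "s \<in> carrier M" "K = N +>\<^bsub>M\<^esub> s"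
    "t \<in> carrier M" "L = N +>\<^bsub>M\<^esub> t"
    by (metis A_cases Q_cases)
  then show "r \<odot>\<^bsub>Q\<^esub> (K \<oplus>\<^bsub>Q\<^esub> L) = r \<odot>\<^bsub>Q\<^esub> K \<oplus>\<^bsub>Q\<^esub> r \<odot>\<^bsub>Q\<^esub> L"
    by (simp add: coset_smult coset_add smult_r_distr)
next
  fix r r' K assume "r \<in> carrier A" "r' \<in> carrier A" "K \<in> carrier Q"
  then obtain q q' s where "q \<in> carrier R" "r = h q" "q' \<in> carrier R" "r' = h q'"
    "s \<in> carrier M" "K = N +>\<^bsub>M\<^esub> s"
    by (metis A_cases Q_cases)
  then show "(r \<otimes>\<^bsub>A\<^esub> r') \<odot>\<^bsub>Q\<^esub> K = r \<odot>\<^bsub>Q\<^esub> (r' \<odot>\<^bsub>Q\<^esub> K)"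
    by (simp add: coset_smult smult_assoc1 flip: h.hom_mult)
next
  fix K assume "K \<in> carrier Q"
  then obtain s where "s \<in> carrier M" "K = N +>\<^bsub>M\<^esub> s"
    by (rule Q_cases)
  then show "\<one>\<^bsub>A\<^esub> \<odot>\<^bsub>Q\<^esub> K = K"
    using coset_smult[OF R.one_closed] by simp
qed

lemma cyclic_quotient_if_cyclic:
  assumes "cyclic_module R M" shows "cyclic_module A Q"
proof -
  obtain x where x: "x \<in> carrier M" "\<And>y. y \<in> carrier M \<Longrightarrow> \<exists>a\<in>carrier R. y = a \<odot>\<^bsub>M\<^esub> x"
    using assms unfolding cyclic_module_def by blast
  have "\<exists>r\<in>carrier A. K = r \<odot>\<^bsub>Q\<^esub> (N +>\<^bsub>M\<^esub> x)" if "K \<in> carrier Q" for K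
  proof -
    obtain s where s: "s \<in> carrier M" "K = N +>\<^bsub>M\<^esub> s"
      using \<open>K \<in> carrier Q\<close> by (rule Q_cases)
    obtain a where a: "a \<in> carrier R" "s = a \<odot>\<^bsub>M\<^esub> x"
      using x(2)[OF s(1)] by blast
    then have "K = h a \<odot>\<^bsub>Q\<^esub> (N +>\<^bsub>M\<^esub> x)"
      using s(2) coset_smult[OF a(1) x(1)] by simp
    then show ?thesis
      using a(1) by blast
  qed
  then show ?thesis
    unfolding cyclic_module_def using x(1) Q_carrier by blast
qed

lemma generated_modulo_if_cyclic_quotient:
  assumes "cyclic_module A Q"
  shows "\<exists>x\<in>carrier M. \<forall>s\<in>carrier M. \<exists>a\<in>carrier R. \<exists>n\<in>N. s = a \<odot>\<^bsub>M\<^esub> x \<oplus>\<^bsub>M\<^esub> n"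
proof -
  obtain K where K: "K \<in> carrier Q" "\<And>L. L \<in> carrier Q \<Longrightarrow> \<exists>r\<in>carrier A. L = r \<odot>\<^bsub>Q\<^esub> K"
    using assms unfolding cyclic_module_def by blast
  obtain x where x: "x \<in> carrier M" "K = N +>\<^bsub>M\<^esub> x"
    using K(1) by (rule Q_cases)
  have "\<exists>a\<in>carrier R. \<exists>n\<in>N. s = a \<odot>\<^bsub>M\<^esub> x \<oplus>\<^bsub>M\<^esub> n" if s: "s \<in> carrier M" for s
  proof -
    obtain r where r: "r \<in> carrier A" "N +>\<^bsub>M\<^esub> s = r \<odot>\<^bsub>Q\<^esub> K"
      using K(2) s Q_carrier by blast
    obtain a where a: "a \<in> carrier R" "r = h a"
      using r(1) by (rule A_cases)
    have "s \<in> N +>\<^bsub>M\<^esub> (a \<odot>\<^bsub>M\<^esub> x)"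
      using r(2) a x coset_smult N.a_rcos_self[OF s] by simp
    then obtain n where n: "n \<in> N" "s = n \<oplus>\<^bsub>M\<^esub> a \<odot>\<^bsub>M\<^esub> x"
      unfolding a_r_coset_def' by blast
    then have "s = a \<odot>\<^bsub>M\<^esub> x \<oplus>\<^bsub>M\<^esub> n"
      using a(1) x(1) N.a_subset M.a_comm by auto
    then show ?thesis
      using a(1) n(1) by blast
  qed
  then show ?thesis
    using x(1) by blast
qed

end

section \<open>The pullback of two discrete valuation domains\<close>

lemma (in ring_hom_cring) hom_inv_Units:
  assumes "a \<in> Units R" shows "h (inv a) = inv\<^bsub>S\<^esub> h a"
proof -
  have "h (a \<otimes> inv a) = h a \<otimes>\<^bsub>S\<^esub> h (inv a)"
    using assms by (intro hom_mult) auto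
  then have "h a \<otimes>\<^bsub>S\<^esub> h (inv a) = \<one>\<^bsub>S\<^esub>"
    using assms by simp
  then show ?thesis
    using S.comm_inv_char[of "h a" "h (inv a)"] R.Units_closed[OF assms] R.Units_inv_closed[OF assms]
    by simp
qed

locale dvr_pullback =
  fixes R1 :: "('a, 'c) ring_scheme" and R2 :: "('b, 'd) ring_scheme"
    and F :: "('e, 'g) ring_scheme" and V1 :: "'a \<Rightarrow> 'e" and V2 :: "'b \<Rightarrow> 'e"
    and P1 :: "'a set" and P2 :: "'b set"
  assumes dvr1: "dvr R1" and dvr2: "dvr R2"
    and maximal1: "maximalideal P1 R1" and maximal2: "maximalideal P2 R2"
    and field_F: "field F"
    and V1_hom: "V1 \<in> ring_hom R1 F" and V1_surj: "V1 ` carrier R1 = carrier F"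
    and V1_kernel: "a_kernel R1 F V1 = P1"
    and V2_hom: "V2 \<in> ring_hom R2 F" and V2_surj: "V2 ` carrier R2 = carrier F"
    and V2_kernel: "a_kernel R2 F V2 = P2"
begin

abbreviation R where "R \<equiv> pullback_ring R1 R2 V1 V2"

sublocale R1: local_principal_domain R1 P1
  using dvr1 maximal1 by (rule local_principal_domainI)

sublocale R2: local_principal_domain R2 P2
  using dvr2 maximal2 by (rule local_principal_domainI)

sublocale F: field F
  by (rule field_F)

sublocale V1: ring_hom_cring R1 F V1
  using V1_hom by unfold_locales

sublocale V2: ring_hom_cring R2 F V2
  using V2_hom by unfold_locales

lemma carrier_R [simp]:
  "x \<in> carrier R \<longleftrightarrow> fst x \<in> carrier R1 \<and> snd x \<in> carrier R2 \<and> V1 (fst x) = V2 (snd x)"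
  by (cases x) (simp add: pullback_ring_def)

lemma R_mult [simp]: "x \<otimes>\<^bsub>R\<^esub> y = (fst x \<otimes>\<^bsub>R1\<^esub> fst y, snd x \<otimes>\<^bsub>R2\<^esub> snd y)"
  and R_add [simp]: "x \<oplus>\<^bsub>R\<^esub> y = (fst x \<oplus>\<^bsub>R1\<^esub> fst y, snd x \<oplus>\<^bsub>R2\<^esub> snd y)"
  and R_one [simp]: "\<one>\<^bsub>R\<^esub> = (\<one>\<^bsub>R1\<^esub>, \<one>\<^bsub>R2\<^esub>)"
  and R_zero [simp]: "\<zero>\<^bsub>R\<^esub> = (\<zero>\<^bsub>R1\<^esub>, \<zero>\<^bsub>R2\<^esub>)"
  by (simp_all add: pullback_ring_def)

lemma cring_R: "cring R"
proof (rule cringI)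
  show "abelian_group R"
  proof (rule abelian_groupI)
    fix x assume x: "x \<in> carrier R"
    then have "(\<ominus>\<^bsub>R1\<^esub> fst x, \<ominus>\<^bsub>R2\<^esub> snd x) \<in> carrier R"
      by simp
    moreover have "(\<ominus>\<^bsub>R1\<^esub> fst x, \<ominus>\<^bsub>R2\<^esub> snd x) \<oplus>\<^bsub>R\<^esub> x = \<zero>\<^bsub>R\<^esub>"
      using x by (simp add: R1.l_neg R2.l_neg)
    ultimately show "\<exists>y\<in>carrier R. y \<oplus>\<^bsub>R\<^esub> x = \<zero>\<^bsub>R\<^esub>"
      by blast
  qed (auto simp: R1.a_ac R2.a_ac)
  show "comm_monoid R"
    by (rule comm_monoidI) (auto simp: R1.m_ac R2.m_ac)
qed (auto simp: R1.l_distr R2.l_distr)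

sublocale R: cring R
  by (rule cring_R)

lemma R_a_inv [simp]:
  assumes "x \<in> carrier R" shows "\<ominus>\<^bsub>R\<^esub> x = (\<ominus>\<^bsub>R1\<^esub> fst x, \<ominus>\<^bsub>R2\<^esub> snd x)"
  using assms by (intro R.minus_equality) (auto simp: R1.l_neg R2.l_neg)

lemma R_pow [simp]:
  "x \<in> carrier R \<Longrightarrow> x [^]\<^bsub>R\<^esub> (n::nat) = (fst x [^]\<^bsub>R1\<^esub> n, snd x [^]\<^bsub>R2\<^esub> n)"
  by (induction n) auto

lemma mem_P1_iff: "a \<in> P1 \<longleftrightarrow> a \<in> carrier R1 \<and> V1 a = \<zero>\<^bsub>F\<^esub>"
  using V1_kernel a_kernel_def'[of R1 F V1] by auto

lemma mem_P2_iff: "b \<in> P2 \<longleftrightarrow> b \<in> carrier R2 \<and> V2 b = \<zero>\<^bsub>F\<^esub>"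
  using V2_kernel a_kernel_def'[of R2 F V2] by auto

lemma snd_partnerE:
  assumes "a \<in> carrier R1" obtains b where "b \<in> carrier R2" "V2 b = V1 a"
proof -
  have "V1 a \<in> V2 ` carrier R2"
    using assms V2_surj by simp
  then show ?thesis
    using that by (metis imageE)
qed

lemma fst_partnerE:
  assumes "b \<in> carrier R2" obtains a where "a \<in> carrier R1" "V1 a = V2 b"
proof -
  have "V2 b \<in> V1 ` carrier R1"
    using assms V1_surj by simp
  then show ?thesis
    using that by (metis imageE)
qed

lemma fst_ring_hom: "ring_hom_cring R R1 fst"
  by (intro ring_hom_cringI ring_hom_ringI2 ring_hom_memI)
    (auto simp: cring_R R1.is_cring R1.ring_axioms R.ring_axioms)

lemma snd_ring_hom: "ring_hom_cring R R2 snd"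
  by (intro ring_hom_cringI ring_hom_ringI2 ring_hom_memI)
    (auto simp: cring_R R2.is_cring R2.ring_axioms R.ring_axioms)

lemma fst_surj: "fst ` carrier R = carrier R1"
proof
  show "carrier R1 \<subseteq> fst ` carrier R"
  proof
    fix a assume "a \<in> carrier R1"
    then obtain b where "b \<in> carrier R2" "V2 b = V1 a"
      by (rule snd_partnerE)
    then have "(a, b) \<in> carrier R"
      using \<open>a \<in> carrier R1\<close> by simp
    then show "a \<in> fst ` carrier R"
      by (metis fst_conv image_eqI)
  qed
qed auto

lemma snd_surj: "snd ` carrier R = carrier R2"
proof
  show "carrier R2 \<subseteq> snd ` carrier R"
  proof
    fix b assume "b \<in> carrier R2"
    then obtain a where "a \<in> carrier R1" "V1 a = V2 b"
      by (rule fst_partnerE)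
    then have "(a, b) \<in> carrier R"
      using \<open>b \<in> carrier R2\<close> by simp
    then show "b \<in> snd ` carrier R"
      by (metis snd_conv image_eqI)
  qed
qed auto

lemma Units_R:
  assumes x: "x \<in> carrier R" and nz: "V1 (fst x) \<noteq> \<zero>\<^bsub>F\<^esub>"
  shows "x \<in> Units R"
proof -
  have u1: "fst x \<in> Units R1" and u2: "snd x \<in> Units R2"
    using x nz R1.Units_if_notin_P R2.Units_if_notin_P mem_P1_iff mem_P2_iff by auto
  then have "V1 (inv\<^bsub>R1\<^esub> fst x) = V2 (inv\<^bsub>R2\<^esub> snd x)"
    using x by (simp add: V1.hom_inv_Units V2.hom_inv_Units)
  then have "(inv\<^bsub>R1\<^esub> fst x, inv\<^bsub>R2\<^esub> snd x) \<in> carrier R"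
    using u1 u2 by simp
  moreover have "(inv\<^bsub>R1\<^esub> fst x, inv\<^bsub>R2\<^esub> snd x) \<otimes>\<^bsub>R\<^esub> x = \<one>\<^bsub>R\<^esub>"
    and "x \<otimes>\<^bsub>R\<^esub> (inv\<^bsub>R1\<^esub> fst x, inv\<^bsub>R2\<^esub> snd x) = \<one>\<^bsub>R\<^esub>"
    using u1 u2 by simp_all
  ultimately show ?thesis
    using x unfolding Units_def by blast
qed

\<comment> \<open>the maximal ideal \<open>P\<^sub>1 \<oplus> P\<^sub>2\<close> of \<open>R\<close>\<close>
abbreviation P where "P \<equiv> a_kernel R F (V1 \<circ> fst)"

lemma mem_P_iff: "x \<in> P \<longleftrightarrow> x \<in> carrier R \<and> V1 (fst x) = \<zero>\<^bsub>F\<^esub>"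
  unfolding a_kernel_def' by (simp only: mem_Collect_eq comp_apply)

lemma mem_kernel_fst_iff: "x \<in> a_kernel R R1 fst \<longleftrightarrow> x \<in> carrier R \<and> fst x = \<zero>\<^bsub>R1\<^esub>"
  unfolding a_kernel_def' by (simp only: mem_Collect_eq)

lemma mem_kernel_snd_iff: "x \<in> a_kernel R R2 snd \<longleftrightarrow> x \<in> carrier R \<and> snd x = \<zero>\<^bsub>R2\<^esub>"
  unfolding a_kernel_def' by (simp only: mem_Collect_eq)

lemma fst_mem_P1:
  assumes "x \<in> P" shows "fst x \<in> P1"
proof -
  have "x \<in> carrier R" "V1 (fst x) = \<zero>\<^bsub>F\<^esub>"
    using assms by (simp_all only: mem_P_iff)
  then show ?thesis
    unfolding mem_P1_iff by simp
qed

lemma snd_mem_P2: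
  assumes "x \<in> P" shows "snd x \<in> P2"
proof -
  have "x \<in> carrier R" "V1 (fst x) = \<zero>\<^bsub>F\<^esub>"
    using assms by (simp_all only: mem_P_iff)
  then show ?thesis
    unfolding mem_P2_iff by simp
qed

lemma primeideal_P: "primeideal P R"
  using cring_R F.domain_axioms
    ring_hom_trans[OF ring_hom_cring.homh[OF fst_ring_hom] V1_hom]
  by (rule primeideal_kernel)

lemma primeideal_kernel_fst: "primeideal (a_kernel R R1 fst) R"
  using cring_R R1.domain_axioms ring_hom_cring.homh[OF fst_ring_hom] by (rule primeideal_kernel)

lemma primeideal_kernel_snd: "primeideal (a_kernel R R2 snd) R"
  using cring_R R2.domain_axioms ring_hom_cring.homh[OF snd_ring_hom] by (rule primeideal_kernel)

lemma proper_ideal_subset_P: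
  assumes I: "ideal I R" "I \<noteq> carrier R" shows "I \<subseteq> P"
proof
  fix x assume x: "x \<in> I"
  then have "x \<in> carrier R"
    by (rule ideal.Icarr[OF I(1)])
  moreover have "x \<notin> Units R"
    using ideal.Units_imp_carrier[OF I(1) x] I(2) by blast
  ultimately show "x \<in> P"
    using Units_R mem_P_iff by blast
qed

lemma Units_if_notin_P: "\<lbrakk>x \<in> carrier R; x \<notin> P\<rbrakk> \<Longrightarrow> x \<in> Units R"
  using Units_R[of x] mem_P_iff[of x] by blast

definition fst_slice :: "('a \<times> 'b) set \<Rightarrow> 'a set" where
  "fst_slice I = {a \<in> carrier R1. (a, \<zero>\<^bsub>R2\<^esub>) \<in> I}"

definition snd_slice :: "('a \<times> 'b) set \<Rightarrow> 'b set" where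
  "snd_slice I = {b \<in> carrier R2. (\<zero>\<^bsub>R1\<^esub>, b) \<in> I}"

lemma ideal_fst_slice:
  assumes "ideal I R" shows "ideal (fst_slice I) R1"
proof -
  interpret I: ideal I R by fact
  show ?thesis
  proof (rule R1.cring_idealI)
    show "fst_slice I \<subseteq> carrier R1" "\<zero>\<^bsub>R1\<^esub> \<in> fst_slice I"
      unfolding fst_slice_def using I.zero_closed by auto
  next
    fix a b assume "a \<in> fst_slice I" "b \<in> fst_slice I"
    then show "a \<oplus>\<^bsub>R1\<^esub> b \<in> fst_slice I"
      unfolding fst_slice_def using I.a_closed[of "(a, \<zero>\<^bsub>R2\<^esub>)" "(b, \<zero>\<^bsub>R2\<^esub>)"] by simp
  next
    fix a assume a: "a \<in> fst_slice I"
    then have "(a, \<zero>\<^bsub>R2\<^esub>) \<in> I" "(a, \<zero>\<^bsub>R2\<^esub>) \<in> carrier R"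
      unfolding fst_slice_def using I.Icarr by blast+
    then have "(\<ominus>\<^bsub>R1\<^esub> a, \<zero>\<^bsub>R2\<^esub>) \<in> I"
      using I.a_inv_closed[of "(a, \<zero>\<^bsub>R2\<^esub>)"] by simp
    then show "\<ominus>\<^bsub>R1\<^esub> a \<in> fst_slice I"
      using a unfolding fst_slice_def by simp
  next
    fix a x assume a: "a \<in> fst_slice I" and x: "x \<in> carrier R1"
    obtain y where y: "y \<in> carrier R2" "V2 y = V1 x"
      using x by (rule snd_partnerE)
    then have "(x, y) \<otimes>\<^bsub>R\<^esub> (a, \<zero>\<^bsub>R2\<^esub>) \<in> I"
      using a x I.I_l_closed[of "(a, \<zero>\<^bsub>R2\<^esub>)" "(x, y)"] unfolding fst_slice_def by simp
    then show "x \<otimes>\<^bsub>R1\<^esub> a \<in> fst_slice I"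
      using a x y unfolding fst_slice_def by simp
  qed
qed

lemma ideal_snd_slice:
  assumes "ideal I R" shows "ideal (snd_slice I) R2"
proof -
  interpret I: ideal I R by fact
  show ?thesis
  proof (rule R2.cring_idealI)
    show "snd_slice I \<subseteq> carrier R2" "\<zero>\<^bsub>R2\<^esub> \<in> snd_slice I"
      unfolding snd_slice_def using I.zero_closed by auto
  next
    fix a b assume "a \<in> snd_slice I" "b \<in> snd_slice I"
    then show "a \<oplus>\<^bsub>R2\<^esub> b \<in> snd_slice I"
      unfolding snd_slice_def using I.a_closed[of "(\<zero>\<^bsub>R1\<^esub>, a)" "(\<zero>\<^bsub>R1\<^esub>, b)"] by simp
  next
    fix a assume a: "a \<in> snd_slice I"
    then have "(\<zero>\<^bsub>R1\<^esub>, a) \<in> I" "(\<zero>\<^bsub>R1\<^esub>, a) \<in> carrier R"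
      unfolding snd_slice_def using I.Icarr by blast+
    then have "(\<zero>\<^bsub>R1\<^esub>, \<ominus>\<^bsub>R2\<^esub> a) \<in> I"
      using I.a_inv_closed[of "(\<zero>\<^bsub>R1\<^esub>, a)"] by simp
    then show "\<ominus>\<^bsub>R2\<^esub> a \<in> snd_slice I"
      using a unfolding snd_slice_def by simp
  next
    fix a x assume a: "a \<in> snd_slice I" and x: "x \<in> carrier R2"
    obtain y where y: "y \<in> carrier R1" "V1 y = V2 x"
      using x by (rule fst_partnerE)
    then have "(y, x) \<otimes>\<^bsub>R\<^esub> (\<zero>\<^bsub>R1\<^esub>, a) \<in> I"
      using a x I.I_l_closed[of "(\<zero>\<^bsub>R1\<^esub>, a)" "(y, x)"] unfolding snd_slice_def by simp
    then show "x \<otimes>\<^bsub>R2\<^esub> a \<in> snd_slice I"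
      using a x y unfolding snd_slice_def by simp
  qed
qed

lemma subset_kernel_snd_if_trivial_snd_slice:
  assumes I: "ideal I R" and trivial: "snd_slice I = {\<zero>\<^bsub>R2\<^esub>}"
  shows "I \<subseteq> a_kernel R R2 snd"
proof
  fix i assume i: "i \<in> I"
  then have ic: "i \<in> carrier R"
    by (rule ideal.Icarr[OF I])
  have "P2 \<noteq> {\<zero>\<^bsub>R2\<^esub>}" "\<zero>\<^bsub>R2\<^esub> \<in> P2"
    using dvr_maximalideal_nonzero[OF dvr2 maximal2] additive_subgroup.zero_closed[OF ideal.axioms(1)[OF R2.ideal_P]]
    by simp_all
  then obtain q where q: "q \<in> P2" "q \<noteq> \<zero>\<^bsub>R2\<^esub>"
    by blast
  then have "(\<zero>\<^bsub>R1\<^esub>, q) \<in> carrier R"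
    using mem_P2_iff by simp
  then have "(\<zero>\<^bsub>R1\<^esub>, q) \<otimes>\<^bsub>R\<^esub> i \<in> I"
    using ideal.I_l_closed[OF I i] by blast
  then have "q \<otimes>\<^bsub>R2\<^esub> snd i \<in> snd_slice I"
    using ic q mem_P2_iff unfolding snd_slice_def by simp
  then have "q \<otimes>\<^bsub>R2\<^esub> snd i = \<zero>\<^bsub>R2\<^esub>"
    using trivial by simp
  then have "snd i = \<zero>\<^bsub>R2\<^esub>"
    using R2.integral[of q "snd i"] q ic mem_P2_iff by simp
  then show "i \<in> a_kernel R R2 snd"
    using ic mem_kernel_snd_iff by blast
qed

lemma subset_kernel_fst_if_trivial_fst_slice:
  assumes I: "ideal I R" and trivial: "fst_slice I = {\<zero>\<^bsub>R1\<^esub>}"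
  shows "I \<subseteq> a_kernel R R1 fst"
proof
  fix i assume i: "i \<in> I"
  then have ic: "i \<in> carrier R"
    by (rule ideal.Icarr[OF I])
  have "P1 \<noteq> {\<zero>\<^bsub>R1\<^esub>}" "\<zero>\<^bsub>R1\<^esub> \<in> P1"
    using dvr_maximalideal_nonzero[OF dvr1 maximal1] additive_subgroup.zero_closed[OF ideal.axioms(1)[OF R1.ideal_P]]
    by simp_all
  then obtain q where q: "q \<in> P1" "q \<noteq> \<zero>\<^bsub>R1\<^esub>"
    by blast
  then have "(q, \<zero>\<^bsub>R2\<^esub>) \<in> carrier R"
    using mem_P1_iff by simp
  then have "(q, \<zero>\<^bsub>R2\<^esub>) \<otimes>\<^bsub>R\<^esub> i \<in> I"
    using ideal.I_l_closed[OF I i] by blast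
  then have "q \<otimes>\<^bsub>R1\<^esub> fst i \<in> fst_slice I"
    using ic q mem_P1_iff unfolding fst_slice_def by simp
  then have "q \<otimes>\<^bsub>R1\<^esub> fst i = \<zero>\<^bsub>R1\<^esub>"
    using trivial by simp
  then have "fst i = \<zero>\<^bsub>R1\<^esub>"
    using R1.integral[of q "fst i"] q ic mem_P1_iff by simp
  then show "i \<in> a_kernel R R1 fst"
    using ic mem_kernel_fst_iff by blast
qed

lemma fst_pow_mem_if_nontrivial_fst_slice:
  assumes I: "ideal I R" and nontrivial: "fst_slice I \<noteq> {\<zero>\<^bsub>R1\<^esub>}"
  shows "\<exists>n::nat. \<forall>x\<in>P. \<forall>k\<ge>n. (fst x [^]\<^bsub>R1\<^esub> k, \<zero>\<^bsub>R2\<^esub>) \<in> I"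
proof -
  obtain n :: nat where n: "\<forall>a\<in>P1. \<forall>k\<ge>n. a [^]\<^bsub>R1\<^esub> k \<in> fst_slice I"
    using R1.pow_mem_nonzero_ideal[OF ideal_fst_slice[OF I] nontrivial] by blast
  have "(fst x [^]\<^bsub>R1\<^esub> k, \<zero>\<^bsub>R2\<^esub>) \<in> I" if x: "x \<in> P" and k: "n \<le> k" for x k
  proof -
    have "fst x \<in> P1"
      using x by (rule fst_mem_P1)
    then have "fst x [^]\<^bsub>R1\<^esub> k \<in> fst_slice I"
      using n k by blast
    then show ?thesis
      unfolding fst_slice_def by blast
  qed
  then show ?thesis
    by blast
qed

lemma snd_pow_mem_if_nontrivial_snd_slice:
  assumes I: "ideal I R" and nontrivial: "snd_slice I \<noteq> {\<zero>\<^bsub>R2\<^esub>}"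
  shows "\<exists>n::nat. \<forall>x\<in>P. \<forall>k\<ge>n. (\<zero>\<^bsub>R1\<^esub>, snd x [^]\<^bsub>R2\<^esub> k) \<in> I"
proof -
  obtain n :: nat where n: "\<forall>b\<in>P2. \<forall>k\<ge>n. b [^]\<^bsub>R2\<^esub> k \<in> snd_slice I"
    using R2.pow_mem_nonzero_ideal[OF ideal_snd_slice[OF I] nontrivial] by blast
  have "(\<zero>\<^bsub>R1\<^esub>, snd x [^]\<^bsub>R2\<^esub> k) \<in> I" if x: "x \<in> P" and k: "n \<le> k" for x k
  proof -
    have "snd x \<in> P2"
      using x by (rule snd_mem_P2)
    then have "snd x [^]\<^bsub>R2\<^esub> k \<in> snd_slice I"
      using n k by blast
    then show ?thesis
      unfolding snd_slice_def by blast
  qed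
  then show ?thesis
    by blast
qed

lemma P_subset_rad_if_nontrivial_slices:
  assumes I: "ideal I R" and "fst_slice I \<noteq> {\<zero>\<^bsub>R1\<^esub>}" "snd_slice I \<noteq> {\<zero>\<^bsub>R2\<^esub>}"
  shows "P \<subseteq> rad R I"
proof
  fix x assume x: "x \<in> P"
  obtain m :: nat where m: "\<forall>x\<in>P. \<forall>k\<ge>m. (fst x [^]\<^bsub>R1\<^esub> k, \<zero>\<^bsub>R2\<^esub>) \<in> I"
    using fst_pow_mem_if_nontrivial_fst_slice[OF assms(1,2)] by blast
  obtain n :: nat where n: "\<forall>x\<in>P. \<forall>k\<ge>n. (\<zero>\<^bsub>R1\<^esub>, snd x [^]\<^bsub>R2\<^esub> k) \<in> I"
    using snd_pow_mem_if_nontrivial_snd_slice[OF assms(1,3)] by blast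
  have xc: "x \<in> carrier R"
    using x mem_P_iff by blast
  have "(fst x [^]\<^bsub>R1\<^esub> (m + n), \<zero>\<^bsub>R2\<^esub>) \<oplus>\<^bsub>R\<^esub> (\<zero>\<^bsub>R1\<^esub>, snd x [^]\<^bsub>R2\<^esub> (m + n)) \<in> I"
    using m[rule_format, OF x, of "m + n"] n[rule_format, OF x, of "m + n"]
    by (intro additive_subgroup.a_closed[OF ideal.axioms(1)[OF I]]) simp_all
  then have "x [^]\<^bsub>R\<^esub> (m + n) \<in> I"
    using xc by simp
  then show "x \<in> rad R I"
    unfolding rad_def using xc by blast
qed

lemma kernel_snd_subset_rad_if_nontrivial_fst_slice:
  assumes I: "ideal I R" and "fst_slice I \<noteq> {\<zero>\<^bsub>R1\<^esub>}"
  shows "a_kernel R R2 snd \<subseteq> rad R I"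
proof
  fix x assume "x \<in> a_kernel R R2 snd"
  then have xc: "x \<in> carrier R" and x2: "snd x = \<zero>\<^bsub>R2\<^esub>"
    using mem_kernel_snd_iff by blast+
  then have "x \<in> P"
    using mem_P_iff by simp
  obtain m :: nat where m: "\<forall>x\<in>P. \<forall>k\<ge>m. (fst x [^]\<^bsub>R1\<^esub> k, \<zero>\<^bsub>R2\<^esub>) \<in> I"
    using fst_pow_mem_if_nontrivial_fst_slice[OF assms] by blast
  then have "(fst x [^]\<^bsub>R1\<^esub> Suc m, \<zero>\<^bsub>R2\<^esub>) \<in> I"
    using m[rule_format, OF \<open>x \<in> P\<close>, of "Suc m"] by simp
  then have "x [^]\<^bsub>R\<^esub> Suc m \<in> I"
    using xc x2 by simp
  then show "x \<in> rad R I"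
    unfolding rad_def using xc by blast
qed

lemma kernel_fst_subset_rad_if_nontrivial_snd_slice:
  assumes I: "ideal I R" and "snd_slice I \<noteq> {\<zero>\<^bsub>R2\<^esub>}"
  shows "a_kernel R R1 fst \<subseteq> rad R I"
proof
  fix x assume "x \<in> a_kernel R R1 fst"
  then have xc: "x \<in> carrier R" and x1: "fst x = \<zero>\<^bsub>R1\<^esub>"
    using mem_kernel_fst_iff by blast+
  then have "x \<in> P"
    using mem_P_iff by simp
  obtain n :: nat where n: "\<forall>x\<in>P. \<forall>k\<ge>n. (\<zero>\<^bsub>R1\<^esub>, snd x [^]\<^bsub>R2\<^esub> k) \<in> I"
    using snd_pow_mem_if_nontrivial_snd_slice[OF assms] by blast
  then have "(\<zero>\<^bsub>R1\<^esub>, snd x [^]\<^bsub>R2\<^esub> Suc n) \<in> I"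
    using n[rule_format, OF \<open>x \<in> P\<close>, of "Suc n"] by simp
  then have "x [^]\<^bsub>R\<^esub> Suc n \<in> I"
    using xc x1 by simp
  then show "x \<in> rad R I"
    unfolding rad_def using xc by blast
qed

lemma eq_kernels_Int_if_trivial_slices:
  assumes I: "ideal I R" and "fst_slice I = {\<zero>\<^bsub>R1\<^esub>}" "snd_slice I = {\<zero>\<^bsub>R2\<^esub>}"
  shows "I = a_kernel R R1 fst \<inter> a_kernel R R2 snd"
proof
  show "I \<subseteq> a_kernel R R1 fst \<inter> a_kernel R R2 snd"
    using subset_kernel_fst_if_trivial_fst_slice[OF assms(1,2)]
      subset_kernel_snd_if_trivial_snd_slice[OF assms(1,3)] by blast
  show "a_kernel R R1 fst \<inter> a_kernel R R2 snd \<subseteq> I"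
  proof
    fix x assume "x \<in> a_kernel R R1 fst \<inter> a_kernel R R2 snd"
    then have "fst x = \<zero>\<^bsub>R1\<^esub>" "snd x = \<zero>\<^bsub>R2\<^esub>"
      using mem_kernel_fst_iff mem_kernel_snd_iff by blast+
    then have "x = \<zero>\<^bsub>R\<^esub>"
      by (simp add: prod_eq_iff)
    then show "x \<in> I"
      using additive_subgroup.zero_closed[OF ideal.axioms(1)[OF I]] by simp
  qed
qed

lemma two_absorbing_primary_proper_ideal:
  assumes I: "ideal I R" "I \<noteq> carrier R"
  shows "two_absorbing_primary R I"
proof (cases "fst_slice I = {\<zero>\<^bsub>R1\<^esub>}"; cases "snd_slice I = {\<zero>\<^bsub>R2\<^esub>}")
  assume "fst_slice I = {\<zero>\<^bsub>R1\<^esub>}" "snd_slice I = {\<zero>\<^bsub>R2\<^esub>}"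
  then show ?thesis
    using R.two_absorbing_primary_Int_primeideals[OF primeideal_kernel_fst primeideal_kernel_snd]
      eq_kernels_Int_if_trivial_slices[OF I(1)] by simp
next
  assume "fst_slice I = {\<zero>\<^bsub>R1\<^esub>}" "snd_slice I \<noteq> {\<zero>\<^bsub>R2\<^esub>}"
  then show ?thesis
    using R.two_absorbing_primary_if_rad_prime[OF I primeideal_kernel_fst]
      subset_kernel_fst_if_trivial_fst_slice[OF I(1)]
      kernel_fst_subset_rad_if_nontrivial_snd_slice[OF I(1)] by blast
next
  assume "fst_slice I \<noteq> {\<zero>\<^bsub>R1\<^esub>}" "snd_slice I = {\<zero>\<^bsub>R2\<^esub>}"
  then show ?thesis
    using R.two_absorbing_primary_if_rad_prime[OF I primeideal_kernel_snd]
      subset_kernel_snd_if_trivial_snd_slice[OF I(1)]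
      kernel_snd_subset_rad_if_nontrivial_fst_slice[OF I(1)] by blast
next
  assume "fst_slice I \<noteq> {\<zero>\<^bsub>R1\<^esub>}" "snd_slice I \<noteq> {\<zero>\<^bsub>R2\<^esub>}"
  then show ?thesis
    using R.two_absorbing_primary_if_rad_prime[OF I primeideal_P proper_ideal_subset_P[OF I]]
      P_subset_rad_if_nontrivial_slices[OF I(1)] by blast
qed

lemma kernel_fst_subset: "a_kernel R R1 fst \<subseteq> {\<zero>\<^bsub>R1\<^esub>} \<times> P2"
proof
  fix x assume "x \<in> a_kernel R R1 fst"
  then have "x \<in> carrier R" "fst x = \<zero>\<^bsub>R1\<^esub>"
    using mem_kernel_fst_iff by blast+
  then show "x \<in> {\<zero>\<^bsub>R1\<^esub>} \<times> P2"
    using mem_P2_iff by (cases x) auto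
qed

lemma kernel_snd_subset: "a_kernel R R2 snd \<subseteq> P1 \<times> {\<zero>\<^bsub>R2\<^esub>}"
proof
  fix x assume "x \<in> a_kernel R R2 snd"
  then have "x \<in> carrier R" "snd x = \<zero>\<^bsub>R2\<^esub>"
    using mem_kernel_snd_iff by blast+
  then show "x \<in> P1 \<times> {\<zero>\<^bsub>R2\<^esub>}"
    using mem_P1_iff by (cases x) auto
qed

lemma cgenideal_fst_generator:
  assumes p: "p \<in> carrier R1" "P1 = PIdl\<^bsub>R1\<^esub> p"
  shows "PIdl\<^bsub>R\<^esub> (p, \<zero>\<^bsub>R2\<^esub>) = P1 \<times> {\<zero>\<^bsub>R2\<^esub>}"
proof
  show "PIdl\<^bsub>R\<^esub> (p, \<zero>\<^bsub>R2\<^esub>) \<subseteq> P1 \<times> {\<zero>\<^bsub>R2\<^esub>}"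
    using p unfolding cgenideal_def by auto
  show "P1 \<times> {\<zero>\<^bsub>R2\<^esub>} \<subseteq> PIdl\<^bsub>R\<^esub> (p, \<zero>\<^bsub>R2\<^esub>)"
  proof
    fix x assume "x \<in> P1 \<times> {\<zero>\<^bsub>R2\<^esub>}"
    then obtain a where a: "a \<in> carrier R1" "x = (a \<otimes>\<^bsub>R1\<^esub> p, \<zero>\<^bsub>R2\<^esub>)"
      using p unfolding cgenideal_def by auto
    obtain b where b: "b \<in> carrier R2" "V2 b = V1 a"
      using a(1) by (rule snd_partnerE)
    have "x = (a, b) \<otimes>\<^bsub>R\<^esub> (p, \<zero>\<^bsub>R2\<^esub>)" "(a, b) \<in> carrier R"
      using a b p by simp_all
    then show "x \<in> PIdl\<^bsub>R\<^esub> (p, \<zero>\<^bsub>R2\<^esub>)"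
      unfolding cgenideal_def by blast
  qed
qed

lemma cgenideal_snd_generator:
  assumes p: "p \<in> carrier R2" "P2 = PIdl\<^bsub>R2\<^esub> p"
  shows "PIdl\<^bsub>R\<^esub> (\<zero>\<^bsub>R1\<^esub>, p) = {\<zero>\<^bsub>R1\<^esub>} \<times> P2"
proof
  show "PIdl\<^bsub>R\<^esub> (\<zero>\<^bsub>R1\<^esub>, p) \<subseteq> {\<zero>\<^bsub>R1\<^esub>} \<times> P2"
    using p unfolding cgenideal_def by auto
  show "{\<zero>\<^bsub>R1\<^esub>} \<times> P2 \<subseteq> PIdl\<^bsub>R\<^esub> (\<zero>\<^bsub>R1\<^esub>, p)"
  proof
    fix x assume "x \<in> {\<zero>\<^bsub>R1\<^esub>} \<times> P2"
    then obtain b where b: "b \<in> carrier R2" "x = (\<zero>\<^bsub>R1\<^esub>, b \<otimes>\<^bsub>R2\<^esub> p)"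
      using p unfolding cgenideal_def by auto
    obtain a where a: "a \<in> carrier R1" "V1 a = V2 b"
      using b(1) by (rule fst_partnerE)
    have "x = (a, b) \<otimes>\<^bsub>R\<^esub> (\<zero>\<^bsub>R1\<^esub>, p)" "(a, b) \<in> carrier R"
      using a b p by simp_all
    then show "x \<in> PIdl\<^bsub>R\<^esub> (\<zero>\<^bsub>R1\<^esub>, p)"
      unfolding cgenideal_def by blast
  qed
qed

lemma one_minus_Units:
  assumes p: "p \<in> P1" and c: "c \<in> carrier R"
  shows "\<one>\<^bsub>R\<^esub> \<ominus>\<^bsub>R\<^esub> c \<otimes>\<^bsub>R\<^esub> (p, \<zero>\<^bsub>R2\<^esub>) \<in> Units R"
proof (rule Units_R)
  have pc: "(p, \<zero>\<^bsub>R2\<^esub>) \<in> carrier R"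
    using p mem_P1_iff by simp
  show "\<one>\<^bsub>R\<^esub> \<ominus>\<^bsub>R\<^esub> c \<otimes>\<^bsub>R\<^esub> (p, \<zero>\<^bsub>R2\<^esub>) \<in> carrier R"
    using R.minus_closed[OF R.one_closed R.m_closed[OF c pc]] .
  have "V1 (\<one>\<^bsub>R1\<^esub> \<ominus>\<^bsub>R1\<^esub> fst c \<otimes>\<^bsub>R1\<^esub> p) = \<one>\<^bsub>F\<^esub>"
    using p c mem_P1_iff by (simp add: a_minus_def)
  then show "V1 (fst (\<one>\<^bsub>R\<^esub> \<ominus>\<^bsub>R\<^esub> c \<otimes>\<^bsub>R\<^esub> (p, \<zero>\<^bsub>R2\<^esub>))) \<noteq> \<zero>\<^bsub>F\<^esub>"
    using pc c by (simp add: a_minus_def)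
qed

end

locale dvr_pullback_module = dvr_pullback +
  fixes S
  assumes module_S: "module (pullback_ring R1 R2 V1 V2) S"
begin

sublocale S: module R S
  by (rule module_S)

abbreviation N1 where "N1 \<equiv> ideal_mult_mod R (P1 \<times> {\<zero>\<^bsub>R2\<^esub>}) S"
abbreviation N2 where "N2 \<equiv> ideal_mult_mod R ({\<zero>\<^bsub>R1\<^esub>} \<times> P2) S"

sublocale S1: lifted_quotient_module R S R1 fst N2 "\<lambda>r. {(r, b) | b. b \<in> carrier R2 \<and> V2 b = V1 r}"
proof (intro lifted_quotient_module.intro lifted_quotient_module_axioms.intro)
  show "submodule N2 R S"
    using mem_P2_iff by (intro S.submodule_ideal_mult_mod) auto
  show "q \<odot>\<^bsub>S\<^esub> m \<in> N2" if "q \<in> a_kernel R R1 fst" "m \<in> carrier S" for q m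
    using that kernel_fst_subset S.ideal_mult_mod_memI by blast
qed (auto simp: module_S fst_ring_hom fst_surj)

sublocale S2: lifted_quotient_module R S R2 snd N1 "\<lambda>r. {(a, r) | a. a \<in> carrier R1 \<and> V1 a = V2 r}"
proof (intro lifted_quotient_module.intro lifted_quotient_module_axioms.intro)
  show "submodule N1 R S"
    using mem_P1_iff by (intro S.submodule_ideal_mult_mod) auto
  show "q \<odot>\<^bsub>S\<^esub> m \<in> N1" if "q \<in> a_kernel R R2 snd" "m \<in> carrier S" for q m
    using that kernel_snd_subset S.ideal_mult_mod_memI by blast
qed (auto simp: module_S snd_ring_hom snd_surj)

lemma quot_S1_eq: "quot_S1 R1 R2 V1 V2 P2 S = S1.Q"
  unfolding quot_S1_def ..

lemma quot_S2_eq: "quot_S2 R1 R2 V1 V2 P1 S = S2.Q"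
  unfolding quot_S2_def ..

lemma pap_multiplication_module_iff_cyclic:
  "pap_multiplication_module R S \<longleftrightarrow> cyclic_module R S"
  using primeideal.axioms(1)[OF primeideal_P] primeideal.I_notcarr[OF primeideal_P, symmetric]
    Units_if_notin_P two_absorbing_primary_proper_ideal
  by (rule S.pap_multiplication_module_iff_cyclic)

lemma pap_multiplication_module_S1_iff_cyclic:
  "pap_multiplication_module R1 S1.Q \<longleftrightarrow> cyclic_module R1 S1.Q"
  using R1.ideal_P R1.P_neq_carrier R1.Units_if_notin_P R1.two_absorbing_primary_proper_ideal
  by (rule module.pap_multiplication_module_iff_cyclic[OF S1.module_Q])

lemma pap_multiplication_module_S2_iff_cyclic:
  "pap_multiplication_module R2 S2.Q \<longleftrightarrow> cyclic_module R2 S2.Q"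
  using R2.ideal_P R2.P_neq_carrier R2.Units_if_notin_P R2.two_absorbing_primary_proper_ideal
  by (rule module.pap_multiplication_module_iff_cyclic[OF S2.module_Q])

lemma S_generated_modulo_snd_if_cyclic_S1:
  assumes p: "p \<in> carrier R2" "P2 = PIdl\<^bsub>R2\<^esub> p" and cyclic: "cyclic_module R1 S1.Q"
  shows "\<exists>x\<in>carrier S. \<forall>s\<in>carrier S. \<exists>a\<in>carrier R. \<exists>t\<in>carrier S.
           s = a \<odot>\<^bsub>S\<^esub> x \<oplus>\<^bsub>S\<^esub> (\<zero>\<^bsub>R1\<^esub>, p) \<odot>\<^bsub>S\<^esub> t"
proof -
  have "p \<in> P2"
    using p R2.cgenideal_self by simp
  then have pc: "(\<zero>\<^bsub>R1\<^esub>, p) \<in> carrier R"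
    unfolding mem_P2_iff by simp
  have N2: "N2 = {(\<zero>\<^bsub>R1\<^esub>, p) \<odot>\<^bsub>S\<^esub> t | t. t \<in> carrier S}"
    using S.ideal_mult_mod_cgenideal[OF pc] unfolding cgenideal_snd_generator[OF p] .
  from S1.generated_modulo_if_cyclic_quotient[OF cyclic]
  obtain x where x: "x \<in> carrier S" "\<forall>s\<in>carrier S. \<exists>a\<in>carrier R. \<exists>n\<in>N2. s = a \<odot>\<^bsub>S\<^esub> x \<oplus>\<^bsub>S\<^esub> n"
    ..
  then show ?thesis
    unfolding N2 by blast
qed

lemma S_generated_modulo_fst_if_cyclic_S2:
  assumes p: "p \<in> carrier R1" "P1 = PIdl\<^bsub>R1\<^esub> p" and cyclic: "cyclic_module R2 S2.Q"
  shows "\<exists>y\<in>carrier S. \<forall>s\<in>carrier S. \<exists>b\<in>carrier R. \<exists>t\<in>carrier S.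
           s = b \<odot>\<^bsub>S\<^esub> y \<oplus>\<^bsub>S\<^esub> (p, \<zero>\<^bsub>R2\<^esub>) \<odot>\<^bsub>S\<^esub> t"
proof -
  have "p \<in> P1"
    using p R1.cgenideal_self by simp
  then have pc: "(p, \<zero>\<^bsub>R2\<^esub>) \<in> carrier R"
    unfolding mem_P1_iff by simp
  have N1: "N1 = {(p, \<zero>\<^bsub>R2\<^esub>) \<odot>\<^bsub>S\<^esub> t | t. t \<in> carrier S}"
    using S.ideal_mult_mod_cgenideal[OF pc] unfolding cgenideal_fst_generator[OF p] .
  from S2.generated_modulo_if_cyclic_quotient[OF cyclic]
  obtain y where y: "y \<in> carrier S" "\<forall>s\<in>carrier S. \<exists>b\<in>carrier R. \<exists>n\<in>N1. s = b \<odot>\<^bsub>S\<^esub> y \<oplus>\<^bsub>S\<^esub> n"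
    ..
  then show ?thesis
    unfolding N1 by blast
qed

lemma cyclic_if_cyclic_quotients:
  assumes "cyclic_module R1 S1.Q" "cyclic_module R2 S2.Q"
  shows "cyclic_module R S"
proof -
  obtain p1 where p1: "p1 \<in> carrier R1" "P1 = PIdl\<^bsub>R1\<^esub> p1"
    using R1.exists_gen[OF R1.ideal_P] by blast
  obtain p2 where p2: "p2 \<in> carrier R2" "P2 = PIdl\<^bsub>R2\<^esub> p2"
    using R2.exists_gen[OF R2.ideal_P] by blast
  have "p1 \<in> P1" "p2 \<in> P2"
    using p1 p2 R1.cgenideal_self R2.cgenideal_self by simp_all
  then have e: "(p1, \<zero>\<^bsub>R2\<^esub>) \<in> carrier R" and f: "(\<zero>\<^bsub>R1\<^esub>, p2) \<in> carrier R"
    unfolding mem_P1_iff mem_P2_iff by simp_all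
  have "(p1, \<zero>\<^bsub>R2\<^esub>) \<otimes>\<^bsub>R\<^esub> (\<zero>\<^bsub>R1\<^esub>, p2) = \<zero>\<^bsub>R\<^esub>"
    using p1 p2 by simp
  moreover have "\<one>\<^bsub>R\<^esub> \<ominus>\<^bsub>R\<^esub> c \<otimes>\<^bsub>R\<^esub> (p1, \<zero>\<^bsub>R2\<^esub>) \<in> Units R" if "c \<in> carrier R" for c
    using one_minus_Units[OF \<open>p1 \<in> P1\<close> that] .
  ultimately show ?thesis
    using S.cyclic_module_if_generated_modulo[OF e f]
      S_generated_modulo_snd_if_cyclic_S1[OF p2 assms(1)]
      S_generated_modulo_fst_if_cyclic_S2[OF p1 assms(2)]
    by blast
qed

lemma cyclic_iff_cyclic_quotients:
  "cyclic_module R S \<longleftrightarrow> cyclic_module R1 S1.Q \<and> cyclic_module R2 S2.Q"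
  using S1.cyclic_quotient_if_cyclic S2.cyclic_quotient_if_cyclic cyclic_if_cyclic_quotients
  by blast

theorem pap_multiplication_module_iff_quotients:
  "pap_multiplication_module R S \<longleftrightarrow>
     pap_multiplication_module R1 (quot_S1 R1 R2 V1 V2 P2 S) \<and>
     pap_multiplication_module R2 (quot_S2 R1 R2 V1 V2 P1 S)"
  unfolding quot_S1_eq quot_S2_eq pap_multiplication_module_iff_cyclic
    pap_multiplication_module_S1_iff_cyclic pap_multiplication_module_S2_iff_cyclic
  by (rule cyclic_iff_cyclic_quotients)

end

theorem theorem3p2:
  fixes R1 :: "('a, 'c) ring_scheme" and R2 :: "('b, 'd) ring_scheme"
    and F :: "('e, 'g) ring_scheme"
    and V1 :: "'a \<Rightarrow> 'e" and V2 :: "'b \<Rightarrow> 'e"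
    and P1 :: "'a set" and P2 :: "'b set" and p1 :: 'a and p2 :: 'b
    and S :: "('a \<times> 'b, 'm, 'f) module_scheme"
  assumes "dvr R1" and "dvr R2"
    and "maximalideal P1 R1" and "p1 \<in> carrier R1" and "P1 = PIdl\<^bsub>R1\<^esub> p1"
    and "maximalideal P2 R2" and "p2 \<in> carrier R2" and "P2 = PIdl\<^bsub>R2\<^esub> p2"
    and "field F"
    and "V1 \<in> ring_hom R1 F" and "V1 ` carrier R1 = carrier F" and "a_kernel R1 F V1 = P1"
    and "V2 \<in> ring_hom R2 F" and "V2 ` carrier R2 = carrier F" and "a_kernel R2 F V2 = P2"
    and "module (pullback_ring R1 R2 V1 V2) S"
    and "carrier S \<noteq> {\<zero>\<^bsub>S\<^esub>}"
    and "ideal_mult_mod (pullback_ring R1 R2 V1 V2) (P1 \<times> {\<zero>\<^bsub>R2\<^esub>}) S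
         \<inter> ideal_mult_mod (pullback_ring R1 R2 V1 V2) ({\<zero>\<^bsub>R1\<^esub>} \<times> P2) S = {\<zero>\<^bsub>S\<^esub>}"
  shows "pap_multiplication_module (pullback_ring R1 R2 V1 V2) S \<longleftrightarrow>
         pap_multiplication_module R1 (quot_S1 R1 R2 V1 V2 P2 S) \<and>
         pap_multiplication_module R2 (quot_S2 R1 R2 V1 V2 P1 S)"
proof -
  interpret dvr_pullback_module R1 R2 F V1 V2 P1 P2 S
    using assms unfolding dvr_pullback_module_def dvr_pullback_def dvr_pullback_module_axioms_def
    by blast
  show ?thesis
    by (rule pap_multiplication_module_iff_quotients)
qed

end
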